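(* Let $G$ be a connected non-complete graph and let $V_1,V_2$ be a partition of $V(G)$ such that $N_G(u)=V_2$ for all $u\in V_1$. Let $v\in V_1$, and let $\widetilde G_v$ be the graph obtained from $G$ by adding a new vertex $v'$ whose neighbourhood is exactly $N_G(v)$ (a false twin of $v$). Then $\chi(\mathcal{R}(\widetilde G_v))=\chi(\mathcal{R}(G))$.
   Context: For a connected graph $G$, a search tree on $G$ is a rooted tree with vertex set $V(G)$ defined recursively: its root is some vertex $r\in V(G)$, and the children of $r$ are the roots of search trees on the connected components of $G-r$. For a rooted tree $T$ and $w\in V(T)$, $T|w$ denotes the subtree rooted at $w$. Let $T$ be a search tree on $G$, let $v$ be a child of $u$ in $T$, and let $p$ be the parent of $u$ (if it exists). The $uv$-rotation transforms $T$ into the search tree $T'$ in which: $u$ is a child of $v$ and $v$ is a child of $p$ (or $v$ is the root if $u$ was the root); every subtree of $u$ in $T$ other than $T|v$ is a subtree of $u$ in $T'$; and every subtree $S$ of $v$ in $T$ is a subtree of $u$ in $T'$ if $u$ is adjacent in $G$ to some vertex of $S$, and a subtree of $v$ in $T'$ otherwise. The rotation graph $\mathcal{R}(G)$ is the graph whose vertices are the search trees on $G$, two being adjacent iff they differ by one rotation. $\chi$ denotes chromatic number. *)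

theory Defs
  imports Main "HOL-Library.FSet"
begin

definition simple_graph :: "'a set \<Rightarrow> ('a \<Rightarrow> 'a \<Rightarrow> bool) \<Rightarrow> bool" where
  "simple_graph V E \<longleftrightarrow> finite V \<and> (\<forall>x y. E x y \<longrightarrow> x \<in> V \<and> y \<in> V)
     \<and> (\<forall>x y. E x y \<longrightarrow> E y x) \<and> (\<forall>x. \<not> E x x)"

definition reach_in :: "('a \<Rightarrow> 'a \<Rightarrow> bool) \<Rightarrow> 'a set \<Rightarrow> 'a \<Rightarrow> 'a \<Rightarrow> bool" where
  "reach_in E S = (\<lambda>a b. E a b \<and> a \<in> S \<and> b \<in> S)\<^sup>*\<^sup>*"

definition connected_in :: "('a \<Rightarrow> 'a \<Rightarrow> bool) \<Rightarrow> 'a set \<Rightarrow> bool" where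
  "connected_in E S \<longleftrightarrow> S \<noteq> {} \<and> (\<forall>x\<in>S. \<forall>y\<in>S. reach_in E S x y)"

definition comps :: "('a \<Rightarrow> 'a \<Rightarrow> bool) \<Rightarrow> 'a set \<Rightarrow> 'a set set" where
  "comps E S = {{y \<in> S. reach_in E S x y} | x. x \<in> S}"

definition nbhd :: "'a set \<Rightarrow> ('a \<Rightarrow> 'a \<Rightarrow> bool) \<Rightarrow> 'a \<Rightarrow> 'a set" where
  "nbhd V E u = {w \<in> V. E u w}"

datatype 'a rtree = Node 'a "'a rtree fset"

primrec root :: "'a rtree \<Rightarrow> 'a" where
  "root (Node r Ch) = r"

primrec verts :: "'a rtree \<Rightarrow> 'a set" where
  "verts (Node r Ch) = insert r (\<Union> (fset (fimage verts Ch)))"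

inductive search_tree :: "('a \<Rightarrow> 'a \<Rightarrow> bool) \<Rightarrow> 'a set \<Rightarrow> 'a rtree \<Rightarrow> bool"
  for E where
  "\<lbrakk> r \<in> S; connected_in E S;
     \<forall>t \<in> fset Ch. search_tree E (verts t) t;
     verts ` fset Ch = comps E (S - {r});
     inj_on verts (fset Ch) \<rbrakk>
   \<Longrightarrow> search_tree E S (Node r Ch)"

definition adj_set :: "('a \<Rightarrow> 'a \<Rightarrow> bool) \<Rightarrow> 'a \<Rightarrow> 'a set \<Rightarrow> bool" where
  "adj_set E u X \<longleftrightarrow> (\<exists>x\<in>X. E u x)"

text \<open>rotation E T T': T' arises from T by one uv-rotation (u a vertex, v a child of u).\<close>
inductive rotation :: "('a \<Rightarrow> 'a \<Rightarrow> bool) \<Rightarrow> 'a rtree \<Rightarrow> 'a rtree \<Rightarrow> bool"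
  for E where
  rot_root: "Node v Dv |\<in>| Ch \<Longrightarrow>
     rotation E (Node u Ch)
       (Node v (finsert
                  (Node u ((Ch |-| {|Node v Dv|}) |\<union>| ffilter (\<lambda>S. adj_set E u (verts S)) Dv))
                  (ffilter (\<lambda>S. \<not> adj_set E u (verts S)) Dv)))"
| rot_sub: "t |\<in>| Ch \<Longrightarrow> rotation E t t' \<Longrightarrow>
     rotation E (Node w Ch) (Node w (finsert t' (Ch |-| {|t|})))"

definition rot_vertices :: "'a set \<Rightarrow> ('a \<Rightarrow> 'a \<Rightarrow> bool) \<Rightarrow> 'a rtree set" where
  "rot_vertices V E = {T. search_tree E V T}"

definition rot_adj :: "('a \<Rightarrow> 'a \<Rightarrow> bool) \<Rightarrow> 'a rtree \<Rightarrow> 'a rtree \<Rightarrow> bool" where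
  "rot_adj E T T' \<longleftrightarrow> T \<noteq> T' \<and> (rotation E T T' \<or> rotation E T' T)"

definition chromatic_number :: "'b set \<Rightarrow> ('b \<Rightarrow> 'b \<Rightarrow> bool) \<Rightarrow> nat" where
  "chromatic_number X A = (LEAST k. \<exists>c :: 'b \<Rightarrow> nat.
      (\<forall>x\<in>X. c x < k) \<and> (\<forall>x\<in>X. \<forall>y\<in>X. A x y \<longrightarrow> c x \<noteq> c y))"

text \<open>Adding a false twin v' (= None) of v: vertices Some ` V plus None.\<close>
definition twin_V :: "'a set \<Rightarrow> 'a option set" where
  "twin_V V = insert None (Some ` V)"

definition twin_E :: "('a \<Rightarrow> 'a \<Rightarrow> bool) \<Rightarrow> 'a \<Rightarrow> 'a option \<Rightarrow> 'a option \<Rightarrow> bool" where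
  "twin_E E v x y = (case (x, y) of
      (Some a, Some b) \<Rightarrow> E a b
    | (None, Some b) \<Rightarrow> E v b
    | (Some a, None) \<Rightarrow> E a v
    | (None, None) \<Rightarrow> False)"

end

theory Submission
  imports Defs "HOL-Number_Theory.Cong"
begin

text \<open>
  Write \<open>G'\<close> for \<open>G\<close> with the false twin \<open>v'\<close> added. Hanging a search tree of \<open>G\<close>
  below \<open>v'\<close> embeds \<open>\<R>(G)\<close> into \<open>\<R>(G')\<close>, which gives one inequality. Conversely,
  contracting the twin pair maps every search tree \<open>T\<close> on \<open>G'\<close> to a search tree \<open>\<pi>(T)\<close> on \<open>G\<close>, and a label
  \<open>\<lambda>(T) \<in> {0,1,2}\<close> records how the twins sit in \<open>T\<close>. Because the twins are adjacent
  exactly to \<open>V\<^sub>2\<close> and everything in \<open>V\<^sub>1\<close> is adjacent to all of \<open>V\<^sub>2\<close>, a search tree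
  containing both twins either has them as sibling leaves or has them on a path of
  single-child nodes; from this one checks that each rotation of \<open>T\<close> either fixes
  \<open>\<pi>(T)\<close> and changes \<open>\<lambda>(T)\<close>, or rotates \<open>\<pi>(T)\<close> and keeps \<open>\<lambda>(T)\<close>. Hence, for a
  proper colouring \<open>c\<close> of \<open>\<R>(G)\<close> with \<open>k \<ge> 3\<close> colours, \<open>(c \<circ> \<pi> + \<lambda>) mod k\<close> is a proper
  colouring of \<open>\<R>(G')\<close>. Finally \<open>k \<ge> 3\<close> is automatic: a non-edge \<open>xy\<close> of \<open>G\<close> and a
  common neighbour \<open>m\<close> with \<open>{x, m, y}\<close> dominating \<open>G\<close> yield a 5-cycle in \<open>\<R>(G)\<close>.
\<close>

section \<open>Reachability and connected components\<close>

lemma verts_eq_set_rtree: "verts t = set_rtree t"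
  by (induction t) auto

lemma verts_map_rtree: "verts (map_rtree f t) = f ` verts t"
  by (simp add: verts_eq_set_rtree rtree.set_map)

lemma verts_nonempty: "verts t \<noteq> {}"
  by (cases t) simp

lemma reach_in_refl [simp]: "reach_in E X a a"
  unfolding reach_in_def by simp

lemma reach_in_edge: "E a b \<Longrightarrow> a \<in> X \<Longrightarrow> b \<in> X \<Longrightarrow> reach_in E X a b"
  unfolding reach_in_def by (rule r_into_rtranclp) simp

lemma reach_in_trans: "reach_in E X a b \<Longrightarrow> reach_in E X b c \<Longrightarrow> reach_in E X a c"
  unfolding reach_in_def by (rule rtranclp_trans)

lemma reach_in_sym:
  assumes sym: "symp E" and r: "reach_in E X a b"
  shows "reach_in E X b a"
proof -
  have "(\<lambda>a b. E a b \<and> a \<in> X \<and> b \<in> X)\<^sup>*\<^sup>* a b"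
    using r unfolding reach_in_def .
  then show ?thesis unfolding reach_in_def
  proof (induction rule: rtranclp_induct)
    case (step y z)
    then have "(\<lambda>a b. E a b \<and> a \<in> X \<and> b \<in> X)\<^sup>*\<^sup>* z y"
      using sympD[OF sym] by (intro r_into_rtranclp) auto
    then show ?case using step(3) by (rule rtranclp_trans)
  qed simp
qed

lemma reach_in_mono: "reach_in E X a b \<Longrightarrow> X \<subseteq> Y \<Longrightarrow> reach_in E Y a b"
  unfolding reach_in_def
  by (induction rule: rtranclp_induct) (auto intro: rtranclp.rtrancl_into_rtrancl)

lemma reach_in_image:
  assumes compat: "\<And>a b. E1 a b = E2 (f a) (f b)" and r: "reach_in E1 X a b"
  shows "reach_in E2 (f ` X) (f a) (f b)"
  using r unfolding reach_in_def
proof (induction rule: rtranclp_induct)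
  case (step y z)
  then show ?case using compat by (auto intro: rtranclp.rtrancl_into_rtrancl)
qed simp

lemma reach_in_image_inv:
  assumes compat: "\<And>a b. E1 a b = E2 (f a) (f b)" and inj: "inj_on f X"
    and r: "reach_in E2 (f ` X) (f a) w" and a: "a \<in> X"
  shows "\<forall>b\<in>X. w = f b \<longrightarrow> reach_in E1 X a b"
  using r unfolding reach_in_def
proof (induction rule: rtranclp_induct)
  case base then show ?case using inj a by (auto dest: inj_onD)
next
  case (step y z)
  then obtain b' where b': "b' \<in> X" "y = f b'" by auto
  show ?case
  proof (intro ballI impI)
    fix b assume b: "b \<in> X" "z = f b"
    have "(\<lambda>a b. E1 a b \<and> a \<in> X \<and> b \<in> X)\<^sup>*\<^sup>* a b'"
      using step(3) b' by auto
    moreover have "E1 b' b" using step(2) b b' compat by auto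
    ultimately show "(\<lambda>a b. E1 a b \<and> a \<in> X \<and> b \<in> X)\<^sup>*\<^sup>* a b"
      using b b' by (auto intro: rtranclp.rtrancl_into_rtrancl)
  qed
qed

lemma reach_in_avoids_isolated:
  assumes sym: "symp E" and iso: "\<forall>y\<in>X. \<not> E z y"
    and r: "reach_in E X a b" and a: "a \<noteq> z"
  shows "reach_in E (X - {z}) a b \<and> b \<noteq> z"
  using r unfolding reach_in_def
proof (induction rule: rtranclp_induct)
  case (step y c)
  then have "c \<noteq> z" using iso sympD[OF sym] by auto
  then show ?case using step by (auto intro: rtranclp.rtrancl_into_rtrancl)
qed (use a in simp)

lemma connected_in_image:
  assumes "\<And>a b. E1 a b = E2 (f a) (f b)" and "connected_in E1 X"
  shows "connected_in E2 (f ` X)"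
  using assms reach_in_image[of E1 E2 f] unfolding connected_in_def by blast

lemma connected_in_singleton: "connected_in E {a}"
  unfolding connected_in_def by simp

lemma connected_in_edge:
  assumes sym: "symp E" and e: "E a b"
  shows "connected_in E {a, b}"
proof -
  have ab: "reach_in E {a, b} a b" by (rule reach_in_edge) (use e in auto)
  then have "reach_in E {a, b} b a" by (rule reach_in_sym[OF sym])
  then show ?thesis unfolding connected_in_def using ab by auto
qed

lemma connected_in_if_dominated:
  assumes sym: "symp E" and KZ: "K \<subseteq> Z" and cK: "connected_in E K"
    and dom: "\<forall>z\<in>Z. \<exists>k\<in>K. E z k"
  shows "connected_in E Z"
proof -
  obtain k0 where k0: "k0 \<in> K" using cK unfolding connected_in_def by blast
  have to_k0: "reach_in E Z z k0" if z: "z \<in> Z" for z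
  proof -
    obtain k where k: "k \<in> K" "E z k" using dom z by blast
    have "reach_in E Z z k" by (rule reach_in_edge) (use k z KZ in auto)
    moreover have "reach_in E K k k0" using cK k(1) k0 unfolding connected_in_def by blast
    then have "reach_in E Z k k0" using KZ by (rule reach_in_mono)
    ultimately show ?thesis by (rule reach_in_trans)
  qed
  show ?thesis unfolding connected_in_def
  proof (intro conjI ballI)
    show "Z \<noteq> {}" using k0 KZ by blast
    fix a b assume "a \<in> Z" "b \<in> Z"
    then show "reach_in E Z a b"
      using to_k0 reach_in_sym[OF sym to_k0] reach_in_trans by metis
  qed
qed

lemma comps_subset: "C \<in> comps E X \<Longrightarrow> C \<subseteq> X"
  unfolding comps_def by auto

lemma comps_empty: "comps E {} = {}"
  unfolding comps_def by simp

lemma reach_class_in_comps: "x \<in> X \<Longrightarrow> {y \<in> X. reach_in E X x y} \<in> comps E X"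
  unfolding comps_def by auto

lemma comps_eq_reach_class:
  assumes sym: "symp E" and C: "C \<in> comps E X" and z: "z \<in> C"
  shows "C = {y \<in> X. reach_in E X z y}"
proof -
  obtain x where x: "x \<in> X" "C = {y \<in> X. reach_in E X x y}" using C unfolding comps_def by auto
  then have xz: "reach_in E X x z" using z by auto
  have zx: "reach_in E X z x" using reach_in_sym[OF sym xz] .
  show ?thesis
  proof (rule set_eqI)
    fix y
    have "reach_in E X x y \<longleftrightarrow> reach_in E X z y"
      using reach_in_trans[OF xz] reach_in_trans[OF zx] by blast
    then show "y \<in> C \<longleftrightarrow> y \<in> {y \<in> X. reach_in E X z y}" using x(2) by simp
  qed
qed

lemma comps_eq_if_common:
  assumes sym: "symp E"
    and "C1 \<in> comps E X" "C2 \<in> comps E X" "z \<in> C1" "z \<in> C2"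
  shows "C1 = C2"
proof -
  have "C1 = {y \<in> X. reach_in E X z y}" by (rule comps_eq_reach_class[OF sym]) fact+
  moreover have "C2 = {y \<in> X. reach_in E X z y}" by (rule comps_eq_reach_class[OF sym]) fact+
  ultimately show ?thesis by simp
qed

lemma Union_comps: "\<Union> (comps E X) = X"
proof
  show "\<Union> (comps E X) \<subseteq> X" by (rule Union_least) (rule comps_subset)
  show "X \<subseteq> \<Union> (comps E X)"
  proof
    fix x assume x: "x \<in> X"
    have "x \<in> {y \<in> X. reach_in E X x y}" using x by simp
    then show "x \<in> \<Union> (comps E X)" using reach_class_in_comps[OF x, of E]
      by (rule UnionI[rotated])
  qed
qed

lemma comps_connected: assumes "connected_in E X" shows "comps E X = {X}"
proof -
  have "{y \<in> X. reach_in E X x y} = X" if "x \<in> X" for x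
    using assms that by (auto simp: connected_in_def)
  moreover have "X \<noteq> {}" using assms by (simp add: connected_in_def)
  ultimately show ?thesis unfolding comps_def by auto
qed

lemma comps_image:
  assumes compat: "\<And>a b. E1 a b = E2 (f a) (f b)" and inj: "inj_on f X"
  shows "comps E2 (f ` X) = (\<lambda>C. f ` C) ` comps E1 X"
proof -
  have reach: "reach_in E2 (f ` X) (f a) (f b) \<longleftrightarrow> reach_in E1 X a b" if "a \<in> X" "b \<in> X" for a b
    using reach_in_image[of E1 E2 f, OF compat] reach_in_image_inv[of E1 E2 f, OF compat inj _ that(1)] that
    by blast
  have image_class: "{y \<in> f ` X. reach_in E2 (f ` X) (f x) y} = f ` {y \<in> X. reach_in E1 X x y}"
    if "x \<in> X" for x
    using reach that by auto
  show ?thesis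
  proof (rule set_eqI, rule iffI)
    fix C assume "C \<in> comps E2 (f ` X)"
    then obtain x where x: "x \<in> X" "C = {y \<in> f ` X. reach_in E2 (f ` X) (f x) y}"
      unfolding comps_def by blast
    then show "C \<in> (\<lambda>C. f ` C) ` comps E1 X"
      using image_class reach_class_in_comps[OF x(1), of E1] by auto
  next
    fix C assume "C \<in> (\<lambda>C. f ` C) ` comps E1 X"
    then obtain x where x: "x \<in> X" "C = f ` {y \<in> X. reach_in E1 X x y}"
      unfolding comps_def by blast
    then show "C \<in> comps E2 (f ` X)"
      using image_class reach_class_in_comps[of "f x" "f ` X" E2] by auto
  qed
qed

lemma comps_isolated:
  assumes sym: "symp E" and iso: "\<forall>y\<in>X. \<not> E z y" and z: "z \<in> X"
  shows "comps E X = insert {z} (comps E (X - {z}))"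
proof -
  have "reach_in E X z b \<longleftrightarrow> b = z" for b
    using reach_in_avoids_isolated[OF sym iso] reach_in_sym[OF sym] by (metis reach_in_refl)
  then have z_class: "{y \<in> X. reach_in E X z y} = {z}" using z by auto
  have class_eq: "{y \<in> X. reach_in E X a y} = {y \<in> X - {z}. reach_in E (X - {z}) a y}"
    if "a \<noteq> z" for a
  proof -
    have "reach_in E X a b \<longleftrightarrow> reach_in E (X - {z}) a b" for b
      using reach_in_avoids_isolated[OF sym iso _ that] reach_in_mono[of E "X - {z}" a b X] by blast
    then show ?thesis using reach_in_avoids_isolated[OF sym iso _ that] by auto
  qed
  show ?thesis
  proof (rule set_eqI, rule iffI)
    fix C assume "C \<in> comps E X"
    then obtain x where x: "x \<in> X" "C = {y \<in> X. reach_in E X x y}" unfolding comps_def by blast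
    show "C \<in> insert {z} (comps E (X - {z}))"
    proof (cases "x = z")
      case True then show ?thesis using x z_class by simp
    next
      case False
      then show ?thesis using x class_eq[of x] reach_class_in_comps[of x "X - {z}" E] by simp
    qed
  next
    fix C assume C: "C \<in> insert {z} (comps E (X - {z}))"
    show "C \<in> comps E X"
    proof (cases "C = {z}")
      case True then show ?thesis using z_class reach_class_in_comps[OF z, of E] by simp
    next
      case False
      then obtain x where x: "x \<in> X - {z}" "C = {y \<in> X - {z}. reach_in E (X - {z}) x y}"
        using C unfolding comps_def by blast
      then show ?thesis using class_eq[of x] reach_class_in_comps[of x X E] by simp
    qed
  qed
qed

section \<open>Search trees and rotations\<close>

lemma search_tree_verts: "search_tree E S t \<Longrightarrow> verts t = S"
proof (induction rule: search_tree.induct)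
  case (1 r S Ch)
  then have "\<Union> (verts ` fset Ch) = S - {r}" using Union_comps by metis
  then show ?case using 1(1) by auto
qed

lemma search_tree_NodeD:
  assumes "search_tree E S (Node r Ch)"
  shows "r \<in> S" "connected_in E S" "\<And>t. t |\<in>| Ch \<Longrightarrow> search_tree E (verts t) t"
    "verts ` fset Ch = comps E (S - {r})" "inj_on verts (fset Ch)"
proof -
  have "r \<in> S \<and> connected_in E S \<and> (\<forall>t. t |\<in>| Ch \<longrightarrow> search_tree E (verts t) t)
    \<and> verts ` fset Ch = comps E (S - {r}) \<and> inj_on verts (fset Ch)"
    using assms by (cases rule: search_tree.cases) simp
  then show "r \<in> S" "connected_in E S" "\<And>t. t |\<in>| Ch \<Longrightarrow> search_tree E (verts t) t"
    "verts ` fset Ch = comps E (S - {r})" "inj_on verts (fset Ch)" by simp_all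
qed

lemma search_tree_connected: "search_tree E S t \<Longrightarrow> connected_in E S"
  by (cases t) (auto dest: search_tree_NodeD(2))

lemma search_tree_child_comp:
  assumes "search_tree E S (Node r Ch)" "c |\<in>| Ch"
  shows "verts c \<in> comps E (S - {r})"
  using search_tree_NodeD(4)[OF assms(1)] assms(2) by blast

lemma search_tree_child_subset:
  assumes "search_tree E S (Node r Ch)" "c |\<in>| Ch"
  shows "verts c \<subseteq> S - {r}"
  using search_tree_child_comp[OF assms] by (rule comps_subset)

lemma search_tree_children_eq:
  assumes sym: "symp E" and st: "search_tree E S (Node r Ch)"
    and "c1 |\<in>| Ch" "c2 |\<in>| Ch" "z \<in> verts c1" "z \<in> verts c2"
  shows "c1 = c2"
proof -
  have "verts c1 = verts c2"
    by (rule comps_eq_if_common[OF sym search_tree_child_comp[OF st assms(3)]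
          search_tree_child_comp[OF st assms(4)] assms(5,6)])
  then show ?thesis using inj_onD[OF search_tree_NodeD(5)[OF st]] assms(3,4) by simp
qed

lemma search_tree_singleton:
  assumes "search_tree E {z} t" shows "t = Node z {||}"
proof (cases t)
  case (Node r Ch)
  then have "r = z" using search_tree_NodeD(1) assms by fastforce
  then have "comps E ({z} - {r}) = {}" by (simp add: comps_empty)
  then have "verts ` fset Ch = {}" using search_tree_NodeD(4)[of E "{z}" r Ch] assms Node by simp
  then have "Ch = {||}" by (simp add: fset_eq_iff)
  then show ?thesis using Node \<open>r = z\<close> by simp
qed

lemma search_tree_leaf: "search_tree E {a} (Node a {||})"
  by (rule search_tree.intros) (auto simp: connected_in_singleton comps_empty)

lemma search_tree_single_child:
  assumes st: "search_tree E S (Node r Ch)" and c: "connected_in E (S - {r})"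
  shows "\<exists>c. Ch = {|c|} \<and> verts c = S - {r}"
proof -
  have e: "verts ` fset Ch = {S - {r}}" using search_tree_NodeD(4)[OF st] comps_connected[OF c] by simp
  then have "S - {r} \<in> verts ` fset Ch" by simp
  then obtain c where c: "c |\<in>| Ch" "verts c = S - {r}" by (auto simp del: fimage.rep_eq)
  have dc: "d = c" if "d |\<in>| Ch" for d
  proof -
    have "verts d = verts c" using e c that by auto
    then show ?thesis using inj_onD[OF search_tree_NodeD(5)[OF st]] that c(1) by simp
  qed
  have "Ch = {|c|}" unfolding fset_eq_iff using dc c(1) by blast
  then show ?thesis using c by simp
qed

lemma search_tree_chain:
  assumes st: "search_tree E S t" and r: "r \<notin> S" and conn: "connected_in E (insert r S)"
  shows "search_tree E (insert r S) (Node r {|t|})"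
proof (rule search_tree.intros)
  have "insert r S - {r} = S" using r by simp
  then show "verts ` fset {|t|} = comps E (insert r S - {r})"
    using search_tree_verts[OF st] comps_connected[OF search_tree_connected[OF st]] by simp
  show "\<forall>t'|\<in>|{|t|}. search_tree E (verts t') t'" using st search_tree_verts[OF st] by simp
qed (simp_all add: conn)

lemma rotation_neq:
  assumes "rotation E t t'" "search_tree E S t"
  shows "t \<noteq> t'"
  using assms
proof (induction arbitrary: S rule: rotation.induct)
  case (rot_root v Dv Ch u)
  have "v \<noteq> u" using search_tree_child_subset[OF rot_root(2,1)] by auto
  then show ?case by simp
next
  case (rot_sub t Ch t' w)
  have "t \<noteq> t'" using rot_sub(3)[OF search_tree_NodeD(3)[OF rot_sub(4) rot_sub(1)]] .
  then have "t |\<notin>| finsert t' (Ch |-| {|t|})" by simp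
  then show ?case using rot_sub(1) by auto
qed

lemma no_rotation_leaf: "\<not> rotation E (Node a {||}) t'"
  by (auto elim: rotation.cases)

lemma Union_fminus:
  assumes "a |\<in>| A" shows "\<Union> (f ` fset A) = f a \<union> \<Union> (f ` fset (A |-| {|a|}))"
proof -
  have "fset A = insert a (fset (A |-| {|a|}))" using assms by auto
  then show ?thesis by (metis Union_insert image_insert)
qed

lemma rotation_verts: "rotation E t t' \<Longrightarrow> verts t' = verts t"
proof (induction rule: rotation.induct)
  case (rot_root v Dv Ch u)
  let ?P = "ffilter (\<lambda>S. adj_set E u (verts S)) Dv"
  let ?N = "ffilter (\<lambda>S. \<not> adj_set E u (verts S)) Dv"
  have d: "fset Dv = fset ?P \<union> fset ?N" by auto
  have "verts (Node u Ch) = insert u (\<Union> (verts ` fset Ch))" by simp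
  also have "\<dots> = insert u (verts (Node v Dv) \<union> \<Union> (verts ` fset (Ch |-| {|Node v Dv|})))"
    unfolding Union_fminus[OF rot_root, of verts] by (rule refl)
  also have "\<dots> = insert u (insert v (\<Union> (verts ` fset Dv)) \<union> \<Union> (verts ` fset (Ch |-| {|Node v Dv|})))"
    by simp
  finally have "verts (Node u Ch) = insert u (insert v (\<Union> (verts ` fset ?P) \<union> \<Union> (verts ` fset ?N))
      \<union> \<Union> (verts ` fset (Ch |-| {|Node v Dv|})))" unfolding d by simp
  then show ?case by auto
next
  case (rot_sub t Ch t' w)
  have "verts (Node w Ch) = insert w (verts t \<union> \<Union> (verts ` fset (Ch |-| {|t|})))"
    using Union_fminus[OF rot_sub.hyps(1), of verts] by simp
  then show ?case using rot_sub.IH by simp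
qed

lemma rotation_in_single_child:
  "rotation E t t' \<Longrightarrow> rotation E (Node w {|t|}) (Node w {|t'|})"
  using rotation.rot_sub[of t "{|t|}" E t' w] by simp

section \<open>Relabelling vertices\<close>

lemma fimage_fminus_fsingleton:
  assumes "a |\<in>| A" and "h a |\<notin>| h |`| (A |-| {|a|})"
  shows "h |`| (A |-| {|a|}) = h |`| A |-| {|h a|}"
proof (rule fset_eqI)
  fix y
  show "y |\<in>| h |`| (A |-| {|a|}) \<longleftrightarrow> y |\<in>| h |`| A |-| {|h a|}"
  proof
    assume y: "y |\<in>| h |`| (A |-| {|a|})"
    then have "y \<noteq> h a" using assms(2) by metis
    then show "y |\<in>| h |`| A |-| {|h a|}" using y by auto
  qed auto
qed

lemma ffilter_eq_self_if_neg_fempty: "ffilter (\<lambda>x. \<not> P x) D = {||} \<Longrightarrow> ffilter P D = D"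
  by (auto simp: fset_eq_iff)

lemma ffilter_neg_eq_self_if_fempty: "ffilter P D = {||} \<Longrightarrow> ffilter (\<lambda>x. \<not> P x) D = D"
  by (auto simp: fset_eq_iff)

lemma fimage_fminus_fsingleton_inj:
  assumes "inj_on h (fset A)" and "a |\<in>| A"
  shows "h |`| (A |-| {|a|}) = h |`| A |-| {|h a|}"
  using assms by (intro fimage_fminus_fsingleton) (auto dest: inj_onD)

lemma inj_on_map_rtree:
  assumes inj: "inj_on f S" and sub: "\<And>c. c |\<in>| Ch \<Longrightarrow> verts c \<subseteq> S"
  shows "inj_on (map_rtree f) (fset Ch)"
proof (rule inj_onI)
  fix c1 c2 assume c: "c1 \<in> fset Ch" "c2 \<in> fset Ch" "map_rtree f c1 = map_rtree f c2"
  show "c1 = c2"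
  proof (rule rtree.inj_map_strong[OF _ c(3)])
    fix z za assume "z \<in> set_rtree c1" "za \<in> set_rtree c2" "f z = f za"
    then show "z = za"
      using sub[of c1] sub[of c2] c(1,2) inj_onD[OF inj] unfolding verts_eq_set_rtree by blast
  qed
qed

lemma ffilter_adj_set_map_rtree:
  assumes compat: "\<And>a b. E1 a b = E2 (f a) (f b)"
  shows "ffilter (\<lambda>S. adj_set E2 (f u) (verts S)) (map_rtree f |`| D)
       = map_rtree f |`| ffilter (\<lambda>S. adj_set E1 u (verts S)) D"
    and "ffilter (\<lambda>S. \<not> adj_set E2 (f u) (verts S)) (map_rtree f |`| D)
       = map_rtree f |`| ffilter (\<lambda>S. \<not> adj_set E1 u (verts S)) D"
proof -
  have "adj_set E2 (f u) (verts (map_rtree f s)) = adj_set E1 u (verts s)" for s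
    unfolding adj_set_def verts_map_rtree using compat by simp
  then show "ffilter (\<lambda>S. adj_set E2 (f u) (verts S)) (map_rtree f |`| D)
       = map_rtree f |`| ffilter (\<lambda>S. adj_set E1 u (verts S)) D"
    and "ffilter (\<lambda>S. \<not> adj_set E2 (f u) (verts S)) (map_rtree f |`| D)
       = map_rtree f |`| ffilter (\<lambda>S. \<not> adj_set E1 u (verts S)) D"
    by (auto simp: fset_eq_iff)
qed

lemma search_tree_map_rtree:
  assumes compat: "\<And>a b. E1 a b = E2 (f a) (f b)"
  shows "search_tree E1 S t \<Longrightarrow> inj_on f S \<Longrightarrow> search_tree E2 (f ` S) (map_rtree f t)"
proof (induction rule: search_tree.induct)
  case (1 r S Ch)
  have inj: "inj_on f S" by fact
  have vc: "verts ` fset Ch = comps E1 (S - {r})" by fact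
  have sub: "verts c \<subseteq> S - {r}" if "c |\<in>| Ch" for c
    using that comps_subset vc by blast
  show ?case unfolding rtree.map
  proof (rule search_tree.intros)
    show "f r \<in> f ` S" using "1.hyps"(1) by simp
    show "connected_in E2 (f ` S)" by (rule connected_in_image[of E1 E2 f, OF compat "1.hyps"(2)])
    show "\<forall>t|\<in>|map_rtree f |`| Ch. search_tree E2 (verts t) t"
    proof
      fix t assume "t |\<in>| map_rtree f |`| Ch"
      then obtain c where c: "c |\<in>| Ch" "t = map_rtree f c" by auto
      have "inj_on f (verts c)" using sub[OF c(1)] inj_on_subset[OF inj] by blast
      then show "search_tree E2 (verts t) t" using "1.IH" c by (simp add: verts_map_rtree)
    qed
    have "f ` S - {f r} = f ` (S - {r})"
      using inj_on_image_set_diff[OF inj, of S "{r}"] "1.hyps"(1) by simp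
    then have "comps E2 (f ` S - {f r}) = (\<lambda>C. f ` C) ` comps E1 (S - {r})"
      using comps_image[of E1 E2 f, OF compat] inj_on_subset[OF inj, of "S - {r}"] by simp
    then show "verts ` fset (map_rtree f |`| Ch) = comps E2 (f ` S - {f r})"
      unfolding vc[symmetric] by (auto simp: verts_map_rtree image_image)
    show "inj_on verts (fset (map_rtree f |`| Ch))"
    proof (rule inj_onI)
      fix t1 t2 assume t: "t1 \<in> fset (map_rtree f |`| Ch)" "t2 \<in> fset (map_rtree f |`| Ch)"
        "verts t1 = verts t2"
      obtain c1 where c1: "c1 |\<in>| Ch" "t1 = map_rtree f c1" using t(1) by auto
      obtain c2 where c2: "c2 |\<in>| Ch" "t2 = map_rtree f c2" using t(2) by auto
      have "f ` verts c1 = f ` verts c2" using t(3) c1 c2 by (simp add: verts_map_rtree)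
      then have "verts c1 = verts c2"
        using inj_on_image_eq_iff[OF inj] sub[OF c1(1)] sub[OF c2(1)] by blast
      then have "c1 = c2" using inj_onD[OF "1.hyps"(4)] c1(1) c2(1) by simp
      then show "t1 = t2" using c1 c2 by simp
    qed
  qed
qed

lemma rotation_map_rtree:
  assumes compat: "\<And>a b. E1 a b = E2 (f a) (f b)"
  shows "rotation E1 t t' \<Longrightarrow> search_tree E1 S t \<Longrightarrow> inj_on f S
    \<Longrightarrow> rotation E2 (map_rtree f t) (map_rtree f t')"
proof (induction arbitrary: S rule: rotation.induct)
  case (rot_root x Dx Ch u)
  let ?m = "map_rtree f"
  have "inj_on ?m (fset Ch)"
    using inj_on_map_rtree[OF rot_root.prems(2)] search_tree_child_subset[OF rot_root.prems(1)] by blast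
  then have e: "?m |`| (Ch |-| {|Node x Dx|}) = ?m |`| Ch |-| {|?m (Node x Dx)|}"
    by (rule fimage_fminus_fsingleton_inj[OF _ rot_root.hyps])
  have mem: "Node (f x) (?m |`| Dx) |\<in>| ?m |`| Ch" using rot_root.hyps by force
  show ?case
    using rotation.rot_root[OF mem, of E2 "f u"]
    unfolding rtree.map fimage_finsert fimage_funion e
      ffilter_adj_set_map_rtree[of E1 E2 f, OF compat]
    by simp
next
  case (rot_sub t Ch t' w)
  let ?m = "map_rtree f"
  have "inj_on ?m (fset Ch)"
    using inj_on_map_rtree[OF rot_sub.prems(2)] search_tree_child_subset[OF rot_sub.prems(1)] by blast
  then have e: "?m |`| (Ch |-| {|t|}) = ?m |`| Ch |-| {|?m t|}"
    by (rule fimage_fminus_fsingleton_inj[OF _ rot_sub.hyps(1)])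
  have "inj_on f (verts t)"
    using inj_on_subset[OF rot_sub.prems(2)] search_tree_child_subset[OF rot_sub.prems(1) rot_sub.hyps(1)]
    by blast
  then have r: "rotation E2 (?m t) (?m t')"
    using rot_sub.IH search_tree_NodeD(3)[OF rot_sub.prems(1) rot_sub.hyps(1)] by blast
  have mem: "?m t |\<in>| ?m |`| Ch" using rot_sub.hyps(1) by simp
  show ?case
    using rotation.rot_sub[OF mem r, of "f w"] unfolding rtree.map fimage_finsert e by simp
qed

section \<open>Colourings\<close>

definition colorable :: "'b set \<Rightarrow> ('b \<Rightarrow> 'b \<Rightarrow> bool) \<Rightarrow> nat \<Rightarrow> bool" where
  "colorable X A k \<longleftrightarrow> (\<exists>c :: 'b \<Rightarrow> nat. (\<forall>x\<in>X. c x < k) \<and> (\<forall>x\<in>X. \<forall>y\<in>X. A x y \<longrightarrow> c x \<noteq> c y))"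

lemma chromatic_number_eq_Least_colorable: "chromatic_number X A = (LEAST k. colorable X A k)"
  unfolding chromatic_number_def colorable_def ..

lemma colorable_pullback:
  assumes col: "colorable Y B k" and maps: "\<And>x. x \<in> X \<Longrightarrow> f x \<in> Y"
    and hom: "\<And>x y. x \<in> X \<Longrightarrow> y \<in> X \<Longrightarrow> A x y \<Longrightarrow> B (f x) (f y)"
  shows "colorable X A k"
proof -
  obtain c where "\<forall>y\<in>Y. c y < k" "\<forall>y\<in>Y. \<forall>y'\<in>Y. B y y' \<longrightarrow> c y \<noteq> c y'"
    using col unfolding colorable_def by blast
  then show ?thesis
    unfolding colorable_def using maps hom by (intro exI[of _ "c \<circ> f"]) auto
qed

text \<open>The colouring of \<open>A\<close> is \<open>(c \<circ> g + h) mod k\<close> for a colouring \<open>c\<close> of \<open>B\<close>.\<close>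
lemma colorable_shifted:
  assumes col: "colorable Y B k" and "m \<le> k"
    and maps: "\<And>x. x \<in> X \<Longrightarrow> g x \<in> Y" and label: "\<And>x. x \<in> X \<Longrightarrow> h x < m"
    and edge: "\<And>x y. x \<in> X \<Longrightarrow> y \<in> X \<Longrightarrow> A x y \<Longrightarrow>
       (g x = g y \<and> h x \<noteq> h y) \<or> (B (g x) (g y) \<and> h x = h y)"
  shows "colorable X A k"
proof -
  obtain c where c: "\<forall>y\<in>Y. c y < k" "\<forall>y\<in>Y. \<forall>y'\<in>Y. B y y' \<longrightarrow> c y \<noteq> c y'"
    using col unfolding colorable_def by blast
  have cancel: "b = b'" if "(a + b) mod k = (a + b') mod k" "b < k" "b' < k" for a b b' :: nat
    using that by (metis cong_def cong_add_lcancel_nat cong_less_modulus_unique_nat)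
  show ?thesis unfolding colorable_def
  proof (intro exI[of _ "\<lambda>x. (c (g x) + h x) mod k"] conjI ballI impI)
    fix x assume "x \<in> X"
    then show "(c (g x) + h x) mod k < k" using c(1) maps by fastforce
  next
    fix x y assume xy: "x \<in> X" "y \<in> X" "A x y"
    from edge[OF xy] show "(c (g x) + h x) mod k \<noteq> (c (g y) + h y) mod k"
    proof
      assume "g x = g y \<and> h x \<noteq> h y"
      then show ?thesis using cancel[of "c (g x)" "h x" "h y"] label xy \<open>m \<le> k\<close> by fastforce
    next
      assume b: "B (g x) (g y) \<and> h x = h y"
      have "g x \<in> Y" "g y \<in> Y" using maps xy by auto
      then have "c (g x) \<noteq> c (g y)" "c (g x) < k" "c (g y) < k" using c b by auto
      then have "(h x + c (g x)) mod k \<noteq> (h x + c (g y)) mod k" using cancel by blast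
      then show ?thesis using b by (simp add: add.commute)
    qed
  qed
qed

lemma three_le_if_colorable_pentagon:
  assumes "colorable X A k" and "T1 \<in> X" "T2 \<in> X" "T3 \<in> X" "T4 \<in> X" "T5 \<in> X"
    and "A T1 T2" "A T2 T3" "A T3 T4" "A T4 T5" "A T5 T1"
  shows "3 \<le> k"
proof -
  obtain c where "\<forall>x\<in>X. c x < k" "\<forall>x\<in>X. \<forall>y\<in>X. A x y \<longrightarrow> c x \<noteq> c y"
    using assms(1) unfolding colorable_def by blast
  then have "c T1 \<noteq> c T2" "c T2 \<noteq> c T3" "c T3 \<noteq> c T4" "c T4 \<noteq> c T5" "c T5 \<noteq> c T1"
    "c T1 < k" "c T2 < k" "c T3 < k" "c T4 < k" "c T5 < k"
    using assms(2-) by blast+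
  then show ?thesis by linarith
qed

section \<open>A pentagon in the rotation graph\<close>

primrec chain :: "'a list \<Rightarrow> 'a rtree \<Rightarrow> 'a rtree" where
  "chain [] t = t"
| "chain (w # ws) t = Node w {|chain ws t|}"

lemma rotation_chain: "rotation E P P' \<Longrightarrow> rotation E (chain ws P) (chain ws P')"
  by (induction ws) (simp_all add: rotation_in_single_child)

lemma chain_inj: "chain ws P = chain ws P' \<Longrightarrow> P = P'"
  by (induction ws) auto

lemma rot_adj_chain:
  "rotation E P P' \<or> rotation E P' P \<Longrightarrow> P \<noteq> P' \<Longrightarrow> rot_adj E (chain ws P) (chain ws P')"
  unfolding rot_adj_def using rotation_chain chain_inj by metis

lemma search_tree_chain_list:
  assumes P: "search_tree E K P"
    and conn: "\<And>Z. K \<subseteq> Z \<Longrightarrow> Z \<subseteq> set ws \<union> K \<Longrightarrow> connected_in E Z"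
    and "distinct ws" and "set ws \<inter> K = {}"
  shows "search_tree E (set ws \<union> K) (chain ws P)"
  using assms(2-)
proof (induction ws)
  case (Cons w ws)
  have "search_tree E (set ws \<union> K) (chain ws P)"
    using Cons.prems by (intro Cons.IH) auto
  moreover have "w \<notin> set ws \<union> K" using Cons.prems(2,3) by auto
  moreover have "connected_in E (insert w (set ws \<union> K))" by (rule Cons.prems(1)) auto
  ultimately show ?case by (simp add: search_tree_chain)
qed (simp add: P)

lemma search_tree_path3:
  assumes sym: "symp E" and conn: "connected_in E {a, b, c}" and "E b c" and "distinct [a, b, c]"
  shows "search_tree E {a, b, c} (Node a {|Node b {|Node c {||}|}|})"
proof -
  have "search_tree E {b, c} (Node b {|Node c {||}|})"
    by (rule search_tree_chain) (use assms(4) search_tree_leaf connected_in_edge[OF sym assms(3)] in auto)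
  then show ?thesis by (rule search_tree_chain) (use conn assms(4) in auto)
qed

lemma search_tree_cherry:
  assumes sym: "symp E" and conn: "connected_in E {x, m, y}" and "\<not> E x y" and "\<not> E x x"
    and "distinct [x, m, y]"
  shows "search_tree E {x, m, y} (Node m {|Node x {||}, Node y {||}|})"
proof (rule search_tree.intros)
  have "comps E {x, y} = insert {x} (comps E ({x, y} - {x}))"
    by (rule comps_isolated[OF sym]) (use assms(3,4) in auto)
  also have "{x, y} - {x} = {y}" using assms(5) by auto
  finally have "comps E {x, y} = {{x}, {y}}" by (simp add: comps_connected[OF connected_in_singleton])
  moreover have "{x, m, y} - {m} = {x, y}" using assms(5) by auto
  ultimately show "verts ` fset {|Node x {||}, Node y {||}|} = comps E ({x, m, y} - {m})" by auto
  show "inj_on verts (fset {|Node x {||}, Node y {||}|})" using assms(5) by (auto simp: inj_on_def)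
  show "\<forall>t|\<in>|{|Node x {||}, Node y {||}|}. search_tree E (verts t) t"
    using search_tree_leaf by auto
qed (use conn in auto)

lemma ffilter_fempty [simp]: "ffilter P {||} = {||}"
  by (auto simp: fset_eq_iff)

lemma ffilter_fsingleton [simp]: "ffilter P {|a|} = (if P a then {|a|} else {||})"
  by (auto simp: fset_eq_iff)

lemma rotation_single_child_root:
  "rotation E (Node a {|Node b D|})
     (Node b (finsert (Node a (ffilter (\<lambda>S. adj_set E a (verts S)) D))
       (ffilter (\<lambda>S. \<not> adj_set E a (verts S)) D)))"
  using rotation.rot_root[of b D "{|Node b D|}" E a] by simp

lemma rotation_leaf_edge: "rotation E (Node a {|Node b {||}|}) (Node b {|Node a {||}|})"
  using rotation.rot_root[of b "{||}" "{|Node b {||}|}" E a] by simp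

lemma rotation_path_adj:
  assumes "adj_set E a (verts C)"
  shows "rotation E (Node a {|Node b {|C|}|}) (Node b {|Node a {|C|}|})"
  using rotation.rot_root[of b "{|C|}" "{|Node b {|C|}|}" E a] assms by simp

lemma rotation_path_nonadj:
  assumes "\<not> adj_set E a (verts C)"
  shows "rotation E (Node a {|Node b {|C|}|}) (Node b {|Node a {||}, C|})"
  using rotation.rot_root[of b "{|C|}" "{|Node b {|C|}|}" E a] assms by simp

text \<open>
  The five search trees on the path \<open>x m y\<close> form a 5-cycle of rotations; stacking all
  other vertices above them keeps them search trees on the whole graph because \<open>{x, m, y}\<close>
  dominates it.
\<close>
lemma rotation_graph_pentagon:
  assumes G: "simple_graph V E" and V: "x \<in> V" "m \<in> V" "y \<in> V"
    and xm: "E x m" and my: "E m y" and nxy: "\<not> E x y" and "x \<noteq> y"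
    and dom: "\<forall>z\<in>V. E z x \<or> E z m \<or> E z y"
  obtains T1 T2 T3 T4 T5 where
    "T1 \<in> rot_vertices V E" "T2 \<in> rot_vertices V E" "T3 \<in> rot_vertices V E"
    "T4 \<in> rot_vertices V E" "T5 \<in> rot_vertices V E"
    "rot_adj E T1 T2" "rot_adj E T2 T3" "rot_adj E T3 T4" "rot_adj E T4 T5" "rot_adj E T5 T1"
proof -
  have sym: "symp E" and irr: "\<And>z. \<not> E z z" and fin: "finite V"
    using G unfolding simple_graph_def by (auto intro: sympI)
  have dist: "distinct [x, m, y]" using xm my irr \<open>x \<noteq> y\<close> by auto
  let ?K = "{x, m, y}"
  have cK: "connected_in E ?K"
    by (rule connected_in_if_dominated[OF sym _ connected_in_edge[OF sym xm]])
      (use xm my sympD[OF sym] in auto)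
  have conn: "connected_in E Z" if "?K \<subseteq> Z" "Z \<subseteq> V" for Z
    by (rule connected_in_if_dominated[OF sym that(1) cK]) (use dom that in auto)
  obtain ws where ws: "set ws = V - ?K" "distinct ws"
    using finite_distinct_list[of "V - ?K"] fin by blast
  have VK: "set ws \<union> ?K = V" using ws(1) V by blast
  have lift: "chain ws P \<in> rot_vertices V E" if "search_tree E ?K P" for P
  proof -
    have "search_tree E (set ws \<union> ?K) (chain ws P)"
      by (rule search_tree_chain_list[OF that _ ws(2)]) (use conn VK ws(1) in auto)
    then show ?thesis unfolding rot_vertices_def VK by simp
  qed
  define P1 where "P1 = Node m {|Node x {||}, Node y {||}|}"
  define P2 where "P2 = Node x {|Node m {|Node y {||}|}|}"
  define P3 where "P3 = Node x {|Node y {|Node m {||}|}|}"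
  define P4 where "P4 = Node y {|Node x {|Node m {||}|}|}"
  define P5 where "P5 = Node y {|Node m {|Node x {||}|}|}"
  have "search_tree E ?K P1" unfolding P1_def
    using search_tree_cherry[OF sym cK nxy irr dist] .
  moreover have "search_tree E ?K P2" unfolding P2_def
    using search_tree_path3[OF sym cK my dist] .
  moreover have "search_tree E ?K P3" unfolding P3_def
    using search_tree_path3[OF sym, of x y m] cK sympD[OF sym my] dist by (auto simp: insert_commute)
  moreover have "search_tree E ?K P4" unfolding P4_def
    using search_tree_path3[OF sym, of y x m] cK xm dist by (auto simp: insert_commute)
  moreover have "search_tree E ?K P5" unfolding P5_def
    using search_tree_path3[OF sym, of y m x] cK sympD[OF sym xm] dist by (auto simp: insert_commute)
  ultimately have T: "chain ws P1 \<in> rot_vertices V E" "chain ws P2 \<in> rot_vertices V E"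
    "chain ws P3 \<in> rot_vertices V E" "chain ws P4 \<in> rot_vertices V E" "chain ws P5 \<in> rot_vertices V E"
    using lift by blast+
  have "rotation E P2 P1" unfolding P1_def P2_def
    using rotation_path_nonadj[of E x "Node y {||}" m] nxy by (simp add: adj_set_def)
  moreover have "rotation E P2 P3" unfolding P2_def P3_def
    by (rule rotation_in_single_child[OF rotation_leaf_edge])
  moreover have "rotation E P3 P4" unfolding P3_def P4_def
    using rotation_path_adj[of E x "Node m {||}" y] xm by (simp add: adj_set_def)
  moreover have "rotation E P4 P5" unfolding P4_def P5_def
    by (rule rotation_in_single_child[OF rotation_leaf_edge])
  moreover have "rotation E P5 P1" unfolding P1_def P5_def
    using rotation_path_nonadj[of E y "Node x {||}" m] nxy sympD[OF sym]
    by (auto simp: adj_set_def finsert_commute)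
  moreover have "P1 \<noteq> P2" "P2 \<noteq> P3" "P3 \<noteq> P4" "P4 \<noteq> P5" "P5 \<noteq> P1"
    unfolding P1_def P2_def P3_def P4_def P5_def using dist by auto
  ultimately show ?thesis using that[OF T] rot_adj_chain[of E] by blast
qed

section \<open>Contracting the twins\<close>

text \<open>
  In trees over the twin graph, \<^const>\<open>None\<close> is the new twin \<open>v'\<close> and \<open>Some v\<close> the old one.
  \<open>contract_twins v T\<close> is the tree \<open>\<pi>(T)\<close> of the introduction: a twin sitting above the
  other one is dropped (it has a single child then), every other occurrence of \<open>v'\<close> is
  renamed to \<open>v\<close>. \<open>twin_label v T\<close> is \<open>\<lambda>(T)\<close>: \<open>0\<close> unless one twin lies above the other,
  and otherwise \<open>2\<close> or \<open>1\<close> according as \<open>v'\<close> or \<open>v\<close> is the upper twin, the two values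
  being swapped once for every vertex above that twin. The maximum over the children picks
  the label of the only child that can contain both twins.
\<close>

definition merge_twins :: "'a \<Rightarrow> 'a option \<Rightarrow> 'a" where
  "merge_twins v x = (case x of None \<Rightarrow> v | Some y \<Rightarrow> y)"

lemma merge_twins_simps [simp]: "merge_twins v None = v" "merge_twins v (Some y) = y"
  by (simp_all add: merge_twins_def)

definition swap12 :: "nat \<Rightarrow> nat" where "swap12 n = (if n = 0 then 0 else 3 - n)"

primrec contract_twins :: "'a \<Rightarrow> 'a option rtree \<Rightarrow> 'a rtree" where
  "contract_twins v (Node r Ch) = (if r \<in> {None, Some v} \<and> {None, Some v} \<subseteq> verts (Node r Ch)
      then the_elem (fset (contract_twins v |`| Ch)) else Node (merge_twins v r) (contract_twins v |`| Ch))"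

primrec twin_label :: "'a \<Rightarrow> 'a option rtree \<Rightarrow> nat" where
  "twin_label v (Node r Ch) = (if \<not> {None, Some v} \<subseteq> verts (Node r Ch) then 0
     else if r \<in> {None, Some v} then (if r = None then 2 else 1)
     else swap12 (Max (insert 0 (fset (twin_label v |`| Ch)))))"

lemma contract_twins_lacking: "\<not> {None, Some v} \<subseteq> verts t \<Longrightarrow> contract_twins v t = map_rtree (merge_twins v) t"
proof (induction t)
  case (Node r Ch)
  have "contract_twins v c = map_rtree (merge_twins v) c" if "c |\<in>| Ch" for c
  proof -
    have "verts c \<subseteq> verts (Node r Ch)" using that by auto
    then have "\<not> {None, Some v} \<subseteq> verts c" using Node.prems by blast
    then show ?thesis using Node.IH that by blast
  qed
  then have e: "contract_twins v |`| Ch = map_rtree (merge_twins v) |`| Ch" by (intro fimage_cong) auto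
  have c: "\<not> (r \<in> {None, Some v} \<and> {None, Some v} \<subseteq> verts (Node r Ch))"
    using Node.prems by blast
  show ?case unfolding contract_twins.simps if_not_P[OF c] e by simp
qed

lemma twin_label_lacking: "\<not> {None, Some v} \<subseteq> verts t \<Longrightarrow> twin_label v t = 0"
  by (cases t) simp

lemma contract_twins_nontwin: assumes "r \<notin> {None, Some v}"
  shows "contract_twins v (Node r Ch) = Node (merge_twins v r) (contract_twins v |`| Ch)"
proof -
  have c: "\<not> (r \<in> {None, Some v} \<and> {None, Some v} \<subseteq> verts (Node r Ch))"
    using assms by blast
  show ?thesis unfolding contract_twins.simps if_not_P[OF c] ..
qed

lemma contract_twins_twin: assumes "r \<in> {None, Some v}" "{None, Some v} \<subseteq> verts (Node r Ch)"
  shows "contract_twins v (Node r Ch) = the_elem (fset (contract_twins v |`| Ch))"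
proof -
  have c: "r \<in> {None, Some v} \<and> {None, Some v} \<subseteq> verts (Node r Ch)"
    using assms by blast
  show ?thesis unfolding contract_twins.simps if_P[OF c] ..
qed

lemma twin_label_twin: assumes "r \<in> {None, Some v}" "{None, Some v} \<subseteq> verts (Node r Ch)"
  shows "twin_label v (Node r Ch) = (if r = None then 2 else 1)"
  using assms by simp

lemma twin_label_nontwin: assumes "r \<notin> {None, Some v}" "{None, Some v} \<subseteq> verts (Node r Ch)"
  shows "twin_label v (Node r Ch) = swap12 (Max (insert 0 (fset (twin_label v |`| Ch))))"
proof -
  have c: "\<not> \<not> {None, Some v} \<subseteq> verts (Node r Ch)" using assms by blast
  have d: "r \<notin> {None, Some v}" using assms by blast
  show ?thesis unfolding twin_label.simps if_not_P[OF c] if_not_P[OF d] ..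
qed

lemma swap12_simps [simp]: "swap12 0 = 0" "swap12 1 = 2" "swap12 2 = 1"
  by (simp_all add: swap12_def)

lemma swap12_le: "swap12 k \<le> 2" unfolding swap12_def by arith

lemma twin_label_le: "twin_label v t \<le> 2"
  by (cases t) (simp add: swap12_le)

lemma swap12_inj: "k \<le> 2 \<Longrightarrow> j \<le> 2 \<Longrightarrow> swap12 k = swap12 j \<Longrightarrow> k = j"
  by (simp add: swap12_def split: if_splits)

lemma twin_label_children_0:
  assumes "r \<notin> {None, Some v}" "\<And>c. c |\<in>| Ch \<Longrightarrow> twin_label v c = 0"
  shows "twin_label v (Node r Ch) = 0"
proof (cases "{None, Some v} \<subseteq> verts (Node r Ch)")
  case True
  have e: "insert 0 (fset (twin_label v |`| Ch)) = {0}" using assms(2) by auto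
  have m: "Max (insert 0 (fset (twin_label v |`| Ch))) = 0" unfolding e by simp
  have "twin_label v (Node r Ch) = swap12 (Max (insert 0 (fset (twin_label v |`| Ch))))"
    by (rule twin_label_nontwin[OF assms(1) True])
  then show ?thesis unfolding m by simp
next
  case False then show ?thesis by (rule twin_label_lacking)
qed

lemma twin_label_single_child:
  assumes "r \<notin> {None, Some v}" "{None, Some v} \<subseteq> verts (Node r {|c|})"
  shows "twin_label v (Node r {|c|}) = swap12 (twin_label v c)"
proof -
  have e: "insert 0 (fset (twin_label v |`| {|c|})) = {0, twin_label v c}" by simp
  have m: "Max (insert 0 (fset (twin_label v |`| {|c|}))) = twin_label v c" unfolding e by simp
  have "twin_label v (Node r {|c|}) = swap12 (Max (insert 0 (fset (twin_label v |`| {|c|}))))"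
    by (rule twin_label_nontwin[OF assms])
  then show ?thesis unfolding m .
qed

declare contract_twins.simps [simp del] twin_label.simps[simp del]

lemma contract_twins_fimage_lacking:
  assumes "\<And>d. d |\<in>| D \<Longrightarrow> \<not> {None, Some v} \<subseteq> verts d"
  shows "contract_twins v |`| D = map_rtree (merge_twins v) |`| D"
proof (rule fimage_cong)
  fix d assume "d |\<in>| D" then show "contract_twins v d = map_rtree (merge_twins v) d"
    by (rule contract_twins_lacking[OF assms])
qed simp

section \<open>The twin graph\<close>

locale false_twin_join =
  fixes V :: "'a set" and E :: "'a \<Rightarrow> 'a \<Rightarrow> bool" and V1 V2 :: "'a set" and v :: 'a
  assumes simple: "simple_graph V E"
    and V1_Un_V2: "V1 \<union> V2 = V" and V1_Int_V2: "V1 \<inter> V2 = {}" and V2_nonempty: "V2 \<noteq> {}"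
    and nbhd_V1: "\<forall>u\<in>V1. nbhd V E u = V2" and v_in_V1: "v \<in> V1"
begin

abbreviation "Et \<equiv> twin_E E v"
abbreviation "Vt \<equiv> twin_V V"
abbreviation "twins \<equiv> {None, Some v}"
definition "W1 = insert None (Some ` V1)"
definition "W2 = Some ` V2"

lemma E_sym: "E x y \<Longrightarrow> E y x" using simple unfolding simple_graph_def by blast
lemma E_irrefl: "\<not> E x x" using simple unfolding simple_graph_def by blast

lemma E_V1_iff: assumes "u \<in> V1" "w \<in> V" shows "E u w \<longleftrightarrow> w \<in> V2"
proof -
  have "nbhd V E u = V2" using nbhd_V1 assms(1) by blast
  then show ?thesis using assms(2) unfolding nbhd_def by blast
qed

lemma v_in_V: "v \<in> V" using v_in_V1 V1_Un_V2 by blast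

lemma Et_merge: "Et x y = E (merge_twins v x) (merge_twins v y)"
  unfolding twin_E_def by (cases x; cases y) (simp_all add: E_irrefl)

lemma sym_Et: "symp Et" unfolding Et_merge by (rule sympI) (rule E_sym)
lemma Et_irrefl: "\<not> Et x x" unfolding Et_merge by (rule E_irrefl)

lemma merge_twins_in_V: "x \<in> Vt \<Longrightarrow> merge_twins v x \<in> V"
  unfolding twin_V_def using v_in_V by auto

lemma merge_twins_image_Vt: "merge_twins v ` Vt = V"
proof
  show "merge_twins v ` Vt \<subseteq> V" using merge_twins_in_V by blast
  show "V \<subseteq> merge_twins v ` Vt"
  proof
    fix x assume "x \<in> V"
    then have "Some x \<in> Vt" unfolding twin_V_def by simp
    then show "x \<in> merge_twins v ` Vt" by (metis image_eqI merge_twins_simps(2))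
  qed
qed

lemma Vt_W1_or_W2: "x \<in> Vt \<Longrightarrow> x \<in> W1 \<or> x \<in> W2"
  unfolding twin_V_def W1_def W2_def using V1_Un_V2 by auto

lemma W1_notin_W2: "x \<in> W1 \<Longrightarrow> x \<notin> W2"
  unfolding W1_def W2_def using V1_Int_V2 by auto

lemma twins_in_W1: "None \<in> W1" "Some v \<in> W1"
  unfolding W1_def using v_in_V1 by auto

lemma merge_twins_W1: "x \<in> W1 \<Longrightarrow> merge_twins v x \<in> V1"
  unfolding W1_def using v_in_V1 by auto

lemma merge_twins_W2: "x \<in> W2 \<Longrightarrow> merge_twins v x \<in> V2"
  unfolding W2_def by auto

lemma V1_subset: "V1 \<subseteq> V" and V2_subset: "V2 \<subseteq> V" using V1_Un_V2 by auto

lemma Et_W1_W2: "x \<in> W1 \<Longrightarrow> y \<in> W2 \<Longrightarrow> Et x y"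
  unfolding Et_merge using E_V1_iff merge_twins_W1 merge_twins_W2 V2_subset by blast

lemma not_Et_W1_W1: "x \<in> W1 \<Longrightarrow> y \<in> W1 \<Longrightarrow> \<not> Et x y"
  unfolding Et_merge using E_V1_iff merge_twins_W1 V1_subset V1_Int_V2 by blast

lemma Et_W1_neighbour: "x \<in> W1 \<Longrightarrow> y \<in> Vt \<Longrightarrow> Et x y \<Longrightarrow> y \<in> W2"
  using not_Et_W1_W1 Vt_W1_or_W2 by blast

lemma merge_twins_eq: "merge_twins v x = merge_twins v y \<Longrightarrow> x = y \<or> (x \<in> twins \<and> y \<in> twins)"
  by (cases x; cases y) auto

lemma inj_on_merge_twins: "\<not> twins \<subseteq> X \<Longrightarrow> inj_on (merge_twins v) X"
  by (rule inj_onI) (use merge_twins_eq in blast)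

lemma connected_in_W1_W2:
  assumes X: "X \<subseteq> Vt" and a: "a \<in> X" "a \<in> W1" and b: "b \<in> X" "b \<in> W2"
  shows "connected_in Et X"
proof -
  have toa: "reach_in Et X y a" if y: "y \<in> X" for y
  proof -
    have "y \<in> W1 \<or> y \<in> W2" using y X Vt_W1_or_W2 by blast
    then show ?thesis
    proof
      assume yA: "y \<in> W1"
      have "reach_in Et X y b" by (rule reach_in_edge) (use Et_W1_W2[OF yA b(2)] y b in auto)
      moreover have "reach_in Et X b a"
        by (rule reach_in_edge) (use Et_W1_W2[OF a(2) b(2)] sympD[OF sym_Et] a b in auto)
      ultimately show ?thesis by (rule reach_in_trans)
    next
      assume yB: "y \<in> W2"
      show ?thesis by (rule reach_in_edge) (use Et_W1_W2[OF a(2) yB] sympD[OF sym_Et] a y in auto)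
    qed
  qed
  show ?thesis unfolding connected_in_def
  proof (intro conjI ballI)
    show "X \<noteq> {}" using a by blast
    fix x y assume "x \<in> X" "y \<in> X"
    show "reach_in Et X x y"
      using toa[OF \<open>x \<in> X\<close>] reach_in_sym[OF sym_Et toa[OF \<open>y \<in> X\<close>]]
        by (rule reach_in_trans)
  qed
qed

lemma reach_in_W1_meets_W2:
  assumes X: "X \<subseteq> Vt" and a: "a \<in> W1" and r: "reach_in Et X a z" and ne: "z \<noteq> a"
  shows "\<exists>b\<in>X. b \<in> W2"
proof -
  have "(\<lambda>x y. Et x y \<and> x \<in> X \<and> y \<in> X)\<^sup>*\<^sup>* a z"
    using r unfolding reach_in_def .
  then show ?thesis
  proof (cases rule: converse_rtranclpE)
    case base then show ?thesis using ne by simp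
  next
    case (step y)
    then have "Et a y" "y \<in> X" by auto
    then have "y \<in> W2" using Et_W1_neighbour[OF a] X by blast
    then show ?thesis using \<open>y \<in> X\<close> by blast
  qed
qed

lemma search_tree_twin_root:
  assumes st: "search_tree Et S (Node r Ch)" and S: "S \<subseteq> Vt" and T: "twins \<subseteq> S" and r: "r \<in> twins"
  shows "\<exists>c. Ch = {|c|} \<and> verts c = S - {r}"
proof -
  obtain ot where ot: "ot \<in> twins" "ot \<noteq> r" using r by auto
  have oS: "ot \<in> S" using ot T by blast
  have rS: "r \<in> S" using r T by blast
  have rA: "r \<in> W1" and oA: "ot \<in> W1" using r ot twins_in_W1 by auto
  have "reach_in Et S r ot" using search_tree_connected[OF st] rS oS unfolding connected_in_def by blast
  then obtain b where b: "b \<in> S" "b \<in> W2" using reach_in_W1_meets_W2[OF S rA] ot(2) by metis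
  have "b \<noteq> r" using b(2) W1_notin_W2 rA by blast
  then have "connected_in Et (S - {r})"
    using connected_in_W1_W2[of "S - {r}" ot b] S oS ot(2) oA b by blast
  then show ?thesis by (rule search_tree_single_child[OF st])
qed

lemma search_tree_nontwin_root:
  assumes st: "search_tree Et S (Node r Ch)" and S: "S \<subseteq> Vt" and T: "twins \<subseteq> S" and r: "r \<notin> twins"
  shows "(\<exists>c. Ch = {|c|} \<and> verts c = S - {r}) \<or> (Node None {||} |\<in>| Ch \<and> Node (Some v) {||} |\<in>| Ch)"
proof (cases "reach_in Et (S - {r}) None (Some v)")
  case True
  have X: "S - {r} \<subseteq> Vt" using S by blast
  obtain b where b: "b \<in> S - {r}" "b \<in> W2" using reach_in_W1_meets_W2[OF X twins_in_W1(1) True]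
    by blast
  have "connected_in Et (S - {r})"
    using connected_in_W1_W2[OF X, of "Some v" b] T r twins_in_W1(2) b by blast
  then show ?thesis using search_tree_single_child[OF st] by blast
next
  case False
  let ?X = "S - {r}"
  have X: "?X \<subseteq> Vt" using S by blast
  have leaf: "Node a {||} |\<in>| Ch" if a: "a \<in> twins" for a
  proof -
    have aX: "a \<in> ?X" using a T r by blast
    have aA: "a \<in> W1" using a twins_in_W1 by blast
    have "{y \<in> ?X. reach_in Et ?X a y} = {a}"
    proof (rule ccontr)
      assume "{y \<in> ?X. reach_in Et ?X a y} \<noteq> {a}"
      then obtain y where y: "y \<in> ?X" "reach_in Et ?X a y" "y \<noteq> a" using aX by auto
      obtain b where b: "b \<in> ?X" "b \<in> W2" using reach_in_W1_meets_W2[OF X aA y(2) y(3)] by blast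
      have "connected_in Et ?X" using connected_in_W1_W2[OF X aX aA b] .
      then have "reach_in Et ?X None (Some v)" using T r unfolding connected_in_def by blast
      then show False using False by simp
    qed
    then have "{a} \<in> comps Et ?X" using reach_class_in_comps[OF aX, of Et] by simp
    then have "{a} \<in> verts ` fset Ch" using search_tree_NodeD(4)[OF st] by simp
    then obtain c where c: "c |\<in>| Ch" "verts c = {a}" by (auto simp del: fimage.rep_eq)
    have "search_tree Et {a} c" using search_tree_NodeD(3)[OF st c(1)] c(2) by simp
    then have "c = Node a {||}" by (rule search_tree_singleton)
    then show ?thesis using c(1) by simp
  qed
  show ?thesis using leaf[of None] leaf[of "Some v"] by simp
qed

lemma adj_set_merge_twins: "adj_set E (merge_twins v u) (merge_twins v ` X) = adj_set Et u X"
  unfolding adj_set_def Et_merge by blast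

lemma twin_leaf_child:
  assumes st: "search_tree Et S (Node r Ch)" and lv: "Node None {||} |\<in>| Ch \<and> Node (Some v) {||} |\<in>| Ch"
    and c: "c |\<in>| Ch" and a: "a \<in> verts c" "a \<in> twins"
  shows "c = Node a {||}"
proof -
  have "Node a {||} |\<in>| Ch" using lv a(2) by auto
  moreover have "a \<in> verts (Node a {||})" by simp
  ultimately show ?thesis using search_tree_children_eq[OF sym_Et st c] a(1) by blast
qed

lemma child_lacks_twins:
  assumes st: "search_tree Et S (Node r Ch)" and lv: "Node None {||} |\<in>| Ch \<and> Node (Some v) {||} |\<in>| Ch"
    and c: "c |\<in>| Ch"
  shows "\<not> twins \<subseteq> verts c"
proof
  assume "twins \<subseteq> verts c"
  then have "c = Node None {||}" using twin_leaf_child[OF st lv c, of None] by simp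
  then show False using \<open>twins \<subseteq> verts c\<close> by simp
qed

lemma single_child_with_twins:
  assumes st: "search_tree Et S (Node r Ch)" and S: "S \<subseteq> Vt" and T: "twins \<subseteq> S" and r: "r \<notin> twins"
    and c: "c |\<in>| Ch" and Tc: "twins \<subseteq> verts c"
  shows "Ch = {|c|}"
proof -
  from search_tree_nontwin_root[OF st S T r] show ?thesis
  proof
    assume "\<exists>c. Ch = {|c|} \<and> verts c = S - {r}"
    then show ?thesis using c by auto
  next
    assume lv: "Node None {||} |\<in>| Ch \<and> Node (Some v) {||} |\<in>| Ch"
    then show ?thesis using child_lacks_twins[OF st lv c] Tc by blast
  qed
qed

lemma merge_twins_image_Diff:
  assumes "r \<notin> twins" shows "merge_twins v ` S - {merge_twins v r} = merge_twins v ` (S - {r})"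
proof
  show "merge_twins v ` (S - {r}) \<subseteq> merge_twins v ` S - {merge_twins v r}"
  proof
    fix z assume "z \<in> merge_twins v ` (S - {r})"
    then obtain y where y: "y \<in> S" "y \<noteq> r" "z = merge_twins v y" by blast
    have "merge_twins v y \<noteq> merge_twins v r" using merge_twins_eq[of y r] y assms by blast
    then show "z \<in> merge_twins v ` S - {merge_twins v r}" using y by auto
  qed
qed blast

lemma search_tree_contract_twins_twin_root:
  assumes st: "search_tree Et S (Node r Ch)" and S: "S \<subseteq> Vt" and T: "twins \<subseteq> S" and r: "r \<in> twins"
  shows "search_tree E (merge_twins v ` S) (contract_twins v (Node r Ch))"
proof -
  obtain c where c: "Ch = {|c|}" "verts c = S - {r}" using search_tree_twin_root[OF st S T r] by blast
  have nt: "\<not> twins \<subseteq> verts c" using c(2) r by blast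
  have g: "contract_twins v (Node r Ch) = map_rtree (merge_twins v) c"
    using contract_twins_twin[OF r, of Ch] T c contract_twins_lacking[OF nt]
    by (simp add: search_tree_verts[OF st])
  have stc: "search_tree Et (verts c) c" using search_tree_NodeD(3)[OF st] c(1) by simp
  have "search_tree E (merge_twins v ` verts c) (map_rtree (merge_twins v) c)"
    by (rule search_tree_map_rtree[of Et E "merge_twins v", OF Et_merge stc inj_on_merge_twins[OF nt]])
  moreover have "merge_twins v ` verts c = merge_twins v ` S"
  proof -
    obtain r' where r': "r' \<in> twins" "r' \<noteq> r" using r by auto
    have "merge_twins v r' = merge_twins v r" using r' r by auto
    moreover have "r' \<in> S - {r}" using r' T by blast
    ultimately have m: "merge_twins v r \<in> merge_twins v ` (S - {r})" by (metis imageI)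
    have "merge_twins v ` S = insert (merge_twins v r) (merge_twins v ` (S - {r}))" using r T by blast
    also have "\<dots> = merge_twins v ` (S - {r})" using m by (rule insert_absorb)
    finally show ?thesis unfolding c(2) by simp
  qed
  ultimately show ?thesis using g by simp
qed

lemma search_tree_contract_twins_single_child:
  assumes st: "search_tree Et S (Node r {|c|})" and r: "r \<notin> twins" and c: "verts c = S - {r}"
    and IH: "search_tree E (merge_twins v ` verts c) (contract_twins v c)"
  shows "search_tree E (merge_twins v ` S) (contract_twins v (Node r {|c|}))"
proof -
  have "r \<in> S" by (rule search_tree_NodeD(1)[OF st])
  then have img: "insert (merge_twins v r) (merge_twins v ` (S - {r})) = merge_twins v ` S" by blast
  have "search_tree E (insert (merge_twins v r) (merge_twins v ` (S - {r})))
      (Node (merge_twins v r) {|contract_twins v c|})"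
  proof (rule search_tree_chain)
    show "search_tree E (merge_twins v ` (S - {r})) (contract_twins v c)" using IH c by simp
    show "merge_twins v r \<notin> merge_twins v ` (S - {r})" using merge_twins_image_Diff[OF r, of S]
      by blast
    show "connected_in E (insert (merge_twins v r) (merge_twins v ` (S - {r})))"
      unfolding img by (rule connected_in_image[of Et E "merge_twins v", OF Et_merge search_tree_NodeD(2)[OF st]])
  qed
  then show ?thesis unfolding img contract_twins_nontwin[OF r] by simp
qed

text \<open>
  When the twins are sibling leaves below \<open>r\<close>, they become a single leaf \<open>v\<close> and the
  other components below \<open>r\<close> are unaffected.
\<close>
lemma comps_merge_twin_leaves:
  assumes st: "search_tree Et S (Node r Ch)" and T: "twins \<subseteq> S" and r: "r \<notin> twins"
    and lv: "Node None {||} |\<in>| Ch \<and> Node (Some v) {||} |\<in>| Ch"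
  shows "comps E (merge_twins v ` (S - {r})) = (\<lambda>C. merge_twins v ` C) ` comps Et (S - {r})"
proof -
  let ?X = "S - {r}"
  have comp_twin: "{a} \<in> comps Et ?X" if "a \<in> twins" for a
  proof -
    have "Node a {||} |\<in>| Ch" using lv that by auto
    then have "verts (Node a {||}) \<in> comps Et ?X" by (rule search_tree_child_comp[OF st])
    then show ?thesis by simp
  qed
  have NX: "None \<in> ?X" and SX: "Some v \<in> ?X" using T r by auto
  have iso: "\<forall>y\<in>?X. \<not> Et None y"
  proof (intro ballI notI)
    fix y assume y: "y \<in> ?X" "Et None y"
    have "{None} = {z \<in> ?X. reach_in Et ?X None z}"
      using comps_eq_reach_class[OF sym_Et comp_twin[of None]] by simp
    moreover have "reach_in Et ?X None y" using reach_in_edge[of Et None y, OF y(2) NX y(1)] .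
    ultimately have "y = None" using y(1) by blast
    then show False using y(2) Et_irrefl by simp
  qed
  have cX: "comps Et ?X = insert {None} (comps Et (?X - {None}))"
    by (rule comps_isolated[OF sym_Et iso NX])
  have SvX: "{Some v} \<in> comps Et (?X - {None})" using comp_twin[of "Some v"] cX by auto
  have "merge_twins v ` ?X = merge_twins v ` (?X - {None})"
  proof
    show "merge_twins v ` ?X \<subseteq> merge_twins v ` (?X - {None})"
    proof
      fix z assume "z \<in> merge_twins v ` ?X"
      then obtain y where y: "y \<in> ?X" "z = merge_twins v y" by blast
      show "z \<in> merge_twins v ` (?X - {None})"
      proof (cases "y = None")
        case True
        then have "z = merge_twins v (Some v)" using y by simp
        then show ?thesis using SX by blast
      qed (use y in blast)
    qed
  qed blast
  then have "comps E (merge_twins v ` ?X) = (\<lambda>C. merge_twins v ` C) ` comps Et (?X - {None})"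
    using comps_image[of Et E "merge_twins v", OF Et_merge inj_on_merge_twins[of "?X - {None}"]] by simp
  also have "\<dots> = (\<lambda>C. merge_twins v ` C) ` comps Et ?X"
  proof -
    have "{v} = merge_twins v ` {Some v}" by simp
    then have "{v} \<in> (\<lambda>C. merge_twins v ` C) ` comps Et (?X - {None})" using SvX by blast
    then show ?thesis unfolding cX by (simp add: insert_absorb)
  qed
  finally show ?thesis .
qed

lemma inj_on_verts_merge_twin_leaves:
  assumes st: "search_tree Et S (Node r Ch)"
    and lv: "Node None {||} |\<in>| Ch \<and> Node (Some v) {||} |\<in>| Ch"
  shows "inj_on verts (fset (map_rtree (merge_twins v) |`| Ch))"
proof (rule inj_onI)
  fix t1 t2 assume t: "t1 \<in> fset (map_rtree (merge_twins v) |`| Ch)"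
    "t2 \<in> fset (map_rtree (merge_twins v) |`| Ch)" "verts t1 = verts t2"
  obtain c1 where c1: "c1 |\<in>| Ch" "t1 = map_rtree (merge_twins v) c1" using t(1) by auto
  obtain c2 where c2: "c2 |\<in>| Ch" "t2 = map_rtree (merge_twins v) c2" using t(2) by auto
  have eq: "merge_twins v ` verts c1 = merge_twins v ` verts c2"
    using t(3) c1 c2 by (simp add: verts_map_rtree)
  obtain z where z: "z \<in> verts c1" using verts_nonempty[of c1] by blast
  then have "merge_twins v z \<in> merge_twins v ` verts c2" using eq by blast
  then obtain z' where z': "z' \<in> verts c2" "merge_twins v z' = merge_twins v z" by (metis imageE)
  from merge_twins_eq[OF z'(2)] show "t1 = t2"
  proof
    assume "z' = z"
    then show ?thesis using search_tree_children_eq[OF sym_Et st c1(1) c2(1) z] z'(1) c1 c2 by simp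
  next
    assume "z' \<in> twins \<and> z \<in> twins"
    then have "c1 = Node z {||}" "c2 = Node z' {||}" "merge_twins v z = v" "merge_twins v z' = v"
      using twin_leaf_child[OF st lv c1(1) z] twin_leaf_child[OF st lv c2(1) z'(1)] by auto
    then show ?thesis using c1 c2 by simp
  qed
qed

lemma search_tree_contract_twins_leaves:
  assumes st: "search_tree Et S (Node r Ch)" and T: "twins \<subseteq> S" and r: "r \<notin> twins"
    and lv: "Node None {||} |\<in>| Ch \<and> Node (Some v) {||} |\<in>| Ch"
  shows "search_tree E (merge_twins v ` S) (contract_twins v (Node r Ch))"
proof -
  have lacks: "\<not> twins \<subseteq> verts c" if "c |\<in>| Ch" for c by (rule child_lacks_twins[OF st lv that])
  have "contract_twins v (Node r Ch) = Node (merge_twins v r) (map_rtree (merge_twins v) |`| Ch)"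
    using contract_twins_nontwin[OF r, of Ch] contract_twins_fimage_lacking[OF lacks] by simp
  moreover have "search_tree E (merge_twins v ` S) (Node (merge_twins v r) (map_rtree (merge_twins v) |`| Ch))"
  proof (rule search_tree.intros)
    show "merge_twins v r \<in> merge_twins v ` S" using search_tree_NodeD(1)[OF st] by blast
    show "connected_in E (merge_twins v ` S)"
      by (rule connected_in_image[of Et E "merge_twins v", OF Et_merge search_tree_NodeD(2)[OF st]])
    show "\<forall>t|\<in>|map_rtree (merge_twins v) |`| Ch. search_tree E (verts t) t"
      using search_tree_map_rtree[of Et E "merge_twins v", OF Et_merge search_tree_NodeD(3)[OF st] inj_on_merge_twins[OF lacks]]
      by (auto simp: verts_map_rtree)
    have "comps E (merge_twins v ` S - {merge_twins v r})
        = (\<lambda>C. merge_twins v ` C) ` (verts ` fset Ch)"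
      unfolding merge_twins_image_Diff[OF r] comps_merge_twin_leaves[OF st T r lv]
        search_tree_NodeD(4)[OF st] ..
    then show "verts ` fset (map_rtree (merge_twins v) |`| Ch)
        = comps E (merge_twins v ` S - {merge_twins v r})"
      by (auto simp: verts_map_rtree image_image)
    show "inj_on verts (fset (map_rtree (merge_twins v) |`| Ch))"
      by (rule inj_on_verts_merge_twin_leaves[OF st lv])
  qed
  ultimately show ?thesis by simp
qed

lemma search_tree_contract_twins:
  "search_tree Et S t \<Longrightarrow> S \<subseteq> Vt \<Longrightarrow> twins \<subseteq> S \<Longrightarrow> search_tree E (merge_twins v ` S) (contract_twins v t)"
proof (induction rule: search_tree.induct)
  case (1 r S Ch)
  have st: "search_tree Et S (Node r Ch)"
    by (rule search_tree.intros) (use "1.hyps" "1.IH" in auto)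
  consider "r \<in> twins" | "r \<notin> twins" "\<exists>c. Ch = {|c|} \<and> verts c = S - {r}"
    | "r \<notin> twins" "Node None {||} |\<in>| Ch \<and> Node (Some v) {||} |\<in>| Ch"
    using search_tree_nontwin_root[OF st "1.prems"] by blast
  then show ?case
  proof cases
    case 1
    then show ?thesis by (rule search_tree_contract_twins_twin_root[OF st "1.prems"])
  next
    case 2
    then obtain c where c: "Ch = {|c|}" "verts c = S - {r}" by blast
    have "search_tree E (merge_twins v ` verts c) (contract_twins v c)"
      using "1.IH" "1.prems" c 2(1) by auto
    then show ?thesis using search_tree_contract_twins_single_child st 2(1) c by blast
  next
    case 3
    then show ?thesis by (rule search_tree_contract_twins_leaves[OF st "1.prems"(2)])
  qed
qed

lemma twins_subset_Vt: "twins \<subseteq> Vt" unfolding twin_V_def using v_in_V by auto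

lemma contract_twins_rot_vertices: "T \<in> rot_vertices Vt Et \<Longrightarrow> contract_twins v T \<in> rot_vertices V E"
  unfolding rot_vertices_def using search_tree_contract_twins[of Vt T] twins_subset_Vt merge_twins_image_Vt
  by simp

section \<open>Rotations of the twin graph\<close>

definition contracted_step :: "'a option rtree \<Rightarrow> 'a option rtree \<Rightarrow> bool" where
  "contracted_step T T' \<longleftrightarrow>
     (contract_twins v T = contract_twins v T' \<and> twin_label v T \<noteq> twin_label v T')
   \<or> (rotation E (contract_twins v T) (contract_twins v T') \<and> twin_label v T = twin_label v T')"

lemma contracted_step_sub_twin_root:
  assumes hs: "s |\<in>| Ch" and rot: "rotation Et s s'"
    and st: "search_tree Et S (Node w Ch)" and S: "S \<subseteq> Vt" and T: "twins \<subseteq> S" and w: "w \<in> twins"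
  shows "contracted_step (Node w Ch) (Node w (finsert s' (Ch |-| {|s|})))"
proof -
  obtain c where c: "Ch = {|c|}" "verts c = S - {w}" using search_tree_twin_root[OF st S T w] by blast
  have sc: "s = c" using hs c(1) by simp
  have ch': "finsert s' (Ch |-| {|s|}) = {|s'|}" using c(1) sc by simp
  have nt: "\<not> twins \<subseteq> verts s" and nt': "\<not> twins \<subseteq> verts s'"
    using c(2) sc w rotation_verts[OF rot] by auto
  have Tv: "twins \<subseteq> verts (Node w Ch)" and Tv': "twins \<subseteq> verts (Node w {|s'|})"
    using T search_tree_verts[OF st] c sc rotation_verts[OF rot] w by auto
  have "contract_twins v (Node w Ch) = map_rtree (merge_twins v) s"
    using contract_twins_twin[OF w Tv] c(1) sc contract_twins_lacking[OF nt] by simp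
  moreover have "contract_twins v (Node w {|s'|}) = map_rtree (merge_twins v) s'"
    using contract_twins_twin[OF w Tv'] contract_twins_lacking[OF nt'] by simp
  moreover have "rotation E (map_rtree (merge_twins v) s) (map_rtree (merge_twins v) s')"
    by (rule rotation_map_rtree[of Et E "merge_twins v", OF Et_merge rot
          search_tree_NodeD(3)[OF st hs] inj_on_merge_twins[OF nt]])
  moreover have "twin_label v (Node w Ch) = twin_label v (Node w {|s'|})"
    unfolding twin_label_twin[OF w Tv] twin_label_twin[OF w Tv'] ..
  ultimately show ?thesis unfolding ch' contracted_step_def by simp
qed

lemma contracted_step_sub_single_child:
  assumes rot: "rotation Et s s'" and step: "contracted_step s s'"
    and w: "w \<notin> twins" and Ts: "twins \<subseteq> verts s"
  shows "contracted_step (Node w {|s|}) (Node w {|s'|})"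
proof -
  have "twins \<subseteq> verts (Node w {|s|})" "twins \<subseteq> verts (Node w {|s'|})"
    using Ts rotation_verts[OF rot] by auto
  then have h: "twin_label v (Node w {|s|}) = swap12 (twin_label v s)"
    "twin_label v (Node w {|s'|}) = swap12 (twin_label v s')"
    using twin_label_single_child[OF w] by blast+
  have "swap12 (twin_label v s) = swap12 (twin_label v s') \<longleftrightarrow> twin_label v s = twin_label v s'"
    using swap12_inj[OF twin_label_le[of v s] twin_label_le[of v s']] by auto
  then show ?thesis
    using step h rotation_in_single_child[of E "contract_twins v s" "contract_twins v s'"]
    unfolding contracted_step_def contract_twins_nontwin[OF w] by auto
qed

lemma contract_twins_notin_siblings:
  assumes st: "search_tree Et S (Node w Ch)" and hs: "s |\<in>| Ch"
    and lv: "Node None {||} |\<in>| Ch \<and> Node (Some v) {||} |\<in>| Ch" and notwin: "\<forall>a\<in>twins. a \<notin> verts s"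
  shows "contract_twins v s |\<notin>| contract_twins v |`| (Ch |-| {|s|})"
proof
  have lacks: "\<not> twins \<subseteq> verts c" if "c |\<in>| Ch" for c by (rule child_lacks_twins[OF st lv that])
  assume "contract_twins v s |\<in>| contract_twins v |`| (Ch |-| {|s|})"
  then obtain d where "d |\<in>| Ch |-| {|s|}" "contract_twins v s = contract_twins v d"
    by (metis fimageE)
  then have d: "d |\<in>| Ch" "d \<noteq> s" "contract_twins v d = contract_twins v s" by auto
  have "merge_twins v ` verts d = merge_twins v ` verts s"
    using d(3) contract_twins_lacking[OF lacks[OF d(1)]] contract_twins_lacking[OF lacks[OF hs]]
    by (metis verts_map_rtree)
  moreover obtain z where z: "z \<in> verts s" using verts_nonempty[of s] by blast
  ultimately obtain z' where z': "z' \<in> verts d" "merge_twins v z' = merge_twins v z"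
    by (metis imageE imageI)
  have "z' = z" using merge_twins_eq[OF z'(2)] notwin z by blast
  then have "d = s" using search_tree_children_eq[OF sym_Et st d(1) hs] z'(1) z by simp
  then show False using d(2) by simp
qed

lemma contracted_step_sub_leaves:
  assumes hs: "s |\<in>| Ch" and rot: "rotation Et s s'"
    and st: "search_tree Et S (Node w Ch)" and w: "w \<notin> twins"
    and lv: "Node None {||} |\<in>| Ch \<and> Node (Some v) {||} |\<in>| Ch"
  shows "contracted_step (Node w Ch) (Node w (finsert s' (Ch |-| {|s|})))"
proof -
  have notwin: "\<forall>a\<in>twins. a \<notin> verts s"
    using twin_leaf_child[OF st lv hs] rot no_rotation_leaf by metis
  then have nt: "\<not> twins \<subseteq> verts s" and nt': "\<not> twins \<subseteq> verts s'"
    using rotation_verts[OF rot] by auto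
  have lacks: "\<not> twins \<subseteq> verts c" if "c |\<in>| Ch" for c by (rule child_lacks_twins[OF st lv that])
  have "rotation E (contract_twins v s) (contract_twins v s')"
    using rotation_map_rtree[of Et E "merge_twins v", OF Et_merge rot search_tree_NodeD(3)[OF st hs]
        inj_on_merge_twins[OF nt]] contract_twins_lacking[OF nt] contract_twins_lacking[OF nt'] by simp
  moreover have "contract_twins v |`| (Ch |-| {|s|}) = contract_twins v |`| Ch |-| {|contract_twins v s|}"
    by (rule fimage_fminus_fsingleton[OF hs contract_twins_notin_siblings[OF st hs lv notwin]])
  ultimately have "rotation E (contract_twins v (Node w Ch))
      (contract_twins v (Node w (finsert s' (Ch |-| {|s|}))))"
    using rotation.rot_sub[of "contract_twins v s" "contract_twins v |`| Ch" E] hs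
    by (simp add: contract_twins_nontwin[OF w])
  moreover have "twin_label v (Node w Ch) = 0"
    using twin_label_children_0[OF w] twin_label_lacking[OF lacks] by blast
  moreover have "twin_label v (Node w (finsert s' (Ch |-| {|s|}))) = 0"
  proof (rule twin_label_children_0[OF w])
    fix d assume "d |\<in>| finsert s' (Ch |-| {|s|})"
    then show "twin_label v d = 0" using twin_label_lacking[OF lacks] twin_label_lacking[OF nt'] by auto
  qed
  ultimately show ?thesis unfolding contracted_step_def by simp
qed

lemma contracted_step_sub:
  assumes hs: "s |\<in>| Ch" and rot: "rotation Et s s'"
    and IH: "\<And>S. search_tree Et S s \<Longrightarrow> search_tree Et S s' \<Longrightarrow> S \<subseteq> Vt \<Longrightarrow> twins \<subseteq> S \<Longrightarrow>
      contracted_step s s'"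
    and st: "search_tree Et S (Node w Ch)" and st': "search_tree Et S (Node w (finsert s' (Ch |-| {|s|})))"
    and S: "S \<subseteq> Vt" and T: "twins \<subseteq> S"
  shows "contracted_step (Node w Ch) (Node w (finsert s' (Ch |-| {|s|})))"
proof (cases "w \<in> twins")
  case True
  then show ?thesis by (rule contracted_step_sub_twin_root[OF hs rot st S T])
next
  case w: False
  from search_tree_nontwin_root[OF st S T w] show ?thesis
  proof
    assume "\<exists>c. Ch = {|c|} \<and> verts c = S - {w}"
    then have Ch: "Ch = {|s|}" and vs: "verts s = S - {w}" using hs by auto
    have "search_tree Et (verts s) s" "search_tree Et (verts s) s'"
      using search_tree_NodeD(3)[OF st hs] search_tree_NodeD(3)[OF st', of s'] rotation_verts[OF rot]
      by auto
    then have "contracted_step s s'" using IH vs S T w by blast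
    then show ?thesis
      using contracted_step_sub_single_child[OF rot _ w] vs T w unfolding Ch by auto
  qed (rule contracted_step_sub_leaves[OF hs rot st w])
qed

end

text \<open>
  A rotation at the root \<open>u\<close> of a subtree with child \<open>x\<close>. In the names of the case lemmas
  the first qualifier describes \<open>u\<close> and the second \<open>x\<close>; \<open>path\<close> means that one twin lies
  above the other, \<open>leaves\<close> that the twins are sibling leaves.
\<close>
locale root_rotation = false_twin_join +
  fixes S :: "'a option set" and u x :: "'a option" and Ch Dx :: "'a option rtree fset"
  assumes hc: "Node x Dx |\<in>| Ch"
    and st: "search_tree Et S (Node u Ch)"
    and st': "search_tree Et S (Node x (finsert (Node u ((Ch |-| {|Node x Dx|})
      |\<union>| ffilter (\<lambda>S. adj_set Et u (verts S)) Dx)) (ffilter (\<lambda>S. \<not> adj_set Et u (verts S)) Dx)))"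
    and S: "S \<subseteq> Vt" and T: "twins \<subseteq> S"
begin

definition "P = ffilter (\<lambda>S. adj_set Et u (verts S)) Dx"
definition "N = ffilter (\<lambda>S. \<not> adj_set Et u (verts S)) Dx"
definition "c = Node x Dx"
definition "U = Node u ((Ch |-| {|c|}) |\<union>| P)"
definition "T' = Node x (finsert U N)"

lemma st_T': "search_tree Et S T'"
  using st' unfolding T'_def U_def c_def P_def N_def .

lemma c_child: "c |\<in>| Ch" using hc unfolding c_def by simp
lemma verts_T: "verts (Node u Ch) = S" by (rule search_tree_verts[OF st])
lemma verts_T': "verts T' = S" by (rule search_tree_verts[OF st_T'])
lemma twins_T: "twins \<subseteq> verts (Node u Ch)" using verts_T T by simp
lemma twins_T': "twins \<subseteq> verts T'" using verts_T' T by simp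
lemma u_in_S: "u \<in> S" by (rule search_tree_NodeD(1)[OF st])
lemma verts_c_subset: "verts c \<subseteq> S - {u}" by (rule search_tree_child_subset[OF st c_child])
lemma u_notin_c: "u \<notin> verts c" using verts_c_subset by blast
lemma x_neq_u: "x \<noteq> u" using u_notin_c unfolding c_def by auto
lemma st_c: "search_tree Et (verts c) c" by (rule search_tree_NodeD(3)[OF st c_child])
lemma verts_c_Vt: "verts c \<subseteq> Vt" using verts_c_subset S by blast

lemma verts_Dx_subset: "D |\<in>| Dx \<Longrightarrow> verts D \<subseteq> verts c - {x}"
  using search_tree_child_subset[OF st_c[unfolded c_def]] unfolding c_def by simp

lemma u_notin_Dx: "D |\<in>| Dx \<Longrightarrow> u \<notin> verts D"
  using verts_Dx_subset u_notin_c by blast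
lemma x_notin_Dx: "D |\<in>| Dx \<Longrightarrow> x \<notin> verts D" using verts_Dx_subset by blast
lemma P_subset: "D |\<in>| P \<Longrightarrow> D |\<in>| Dx" unfolding P_def by simp
lemma N_subset: "D |\<in>| N \<Longrightarrow> D |\<in>| Dx" unfolding N_def by simp
lemma U_notin_Dx: assumes "D |\<in>| Dx" shows "D \<noteq> U"
  using u_notin_Dx[OF assms] unfolding U_def by auto

lemma st_U: "search_tree Et (verts U) U"
  using search_tree_NodeD(3)[OF st_T'[unfolded T'_def], of U] by simp

lemma N_empty_if_single:
  assumes "finsert U N = {|c'|}" shows "N = {||}"
proof -
  have "U = c'" using assms by (metis finsertI1 fsingletonE)
  then have "D = U" if "D |\<in>| N" for D using that assms by auto
  then show ?thesis using U_notin_Dx N_subset by (metis fset_eqI bot_fset.rep_eq empty_iff)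
qed

lemma P_eq_Dx: "N = {||} \<Longrightarrow> P = Dx"
  using ffilter_eq_self_if_neg_fempty[of "\<lambda>S. adj_set Et u (verts S)" Dx]
    unfolding P_def N_def by simp

lemma map_c: "map_rtree (merge_twins v) c = Node (merge_twins v x) (map_rtree (merge_twins v) |`| Dx)"
  unfolding c_def by simp

lemma twin_root_child: assumes "u \<in> twins" shows "Ch = {|c|}"
  using search_tree_twin_root[OF st S T assms] c_child by auto

lemma contract_twin_root:
  assumes uT: "u \<in> twins" shows "contract_twins v (Node u Ch) = map_rtree (merge_twins v) c"
proof -
  have "\<not> twins \<subseteq> verts c" using u_notin_c uT by blast
  then show ?thesis
    using contract_twins_twin[OF uT twins_T] twin_root_child[OF uT] contract_twins_lacking by simp
qed

lemma contract_Dx_twin_root: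
  "u \<in> twins \<Longrightarrow> contract_twins v |`| Dx = map_rtree (merge_twins v) |`| Dx"
  by (rule contract_twins_fimage_lacking) (use u_notin_Dx in blast)

lemma twin_leaves_at_root:
  assumes uN: "u \<notin> twins" and nTc: "\<not> twins \<subseteq> verts c"
  shows "Node None {||} |\<in>| Ch \<and> Node (Some v) {||} |\<in>| Ch"
  using search_tree_nontwin_root[OF st S T uN]
proof
  assume "\<exists>c'. Ch = {|c'|} \<and> verts c' = S - {u}"
  then have "verts c = S - {u}" using c_child by auto
  then show ?thesis using nTc T uN by blast
qed

lemma contracted_step_twin_twin:
  assumes uT: "u \<in> twins" and xT: "x \<in> twins"
  shows "contracted_step (Node u Ch) T'"
proof -
  have Chm: "Ch |-| {|c|} = {||}" using twin_root_child[OF uT] by simp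
  note gT = contract_twin_root[OF uT]
  have hT: "twin_label v (Node u Ch) = (if u = None then 2 else 1)"
    by (rule twin_label_twin[OF uT twins_T])
  obtain c' where c': "finsert U N = {|c'|}" "verts c' = S - {x}"
    using search_tree_twin_root[OF st_T'[unfolded T'_def] S T xT] by blast
  have Ne: "N = {||}" by (rule N_empty_if_single[OF c'(1)])
  have Pe: "P = Dx" by (rule P_eq_Dx[OF Ne])
  have T'e: "T' = Node x {|Node u Dx|}" unfolding T'_def U_def Ne Pe Chm by simp
  have nt2: "\<not> twins \<subseteq> verts (Node u Dx)" using x_notin_Dx x_neq_u xT by auto
  have g2: "contract_twins v T' = map_rtree (merge_twins v) (Node u Dx)"
  proof -
    have "contract_twins v T' = the_elem (fset (contract_twins v |`| {|Node u Dx|}))" unfolding T'e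
      by (rule contract_twins_twin[OF xT twins_T'[unfolded T'e]])
    also have "\<dots> = contract_twins v (Node u Dx)" by simp
    also have "\<dots> = map_rtree (merge_twins v) (Node u Dx)" by (rule contract_twins_lacking[OF nt2])
    finally show ?thesis .
  qed
  have unx: "merge_twins v u = merge_twins v x" using uT xT by auto
  have hT': "twin_label v T' = (if x = None then 2 else 1)"
    unfolding T'e by (rule twin_label_twin[OF xT twins_T'[unfolded T'e]])
  have "twin_label v (Node u Ch) \<noteq> twin_label v T'" using hT hT' uT xT x_neq_u by auto
  then show ?thesis using gT g2 map_c unx by (simp add: contracted_step_def)
qed

lemma contracted_step_twin_nontwin_path:
  assumes uT: "u \<in> twins" and xN: "x \<notin> twins"
    and c': "finsert U N = {|c'|}" "verts c' = S - {x}"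
  shows "contracted_step (Node u Ch) T'"
proof -
  have Chm: "Ch |-| {|c|} = {||}" using twin_root_child[OF uT] by simp
  note gT = contract_twin_root[OF uT]
  have hT: "twin_label v (Node u Ch) = (if u = None then 2 else 1)"
    by (rule twin_label_twin[OF uT twins_T])
  have Ne: "N = {||}" by (rule N_empty_if_single[OF c'(1)])
  have Pe: "P = Dx" by (rule P_eq_Dx[OF Ne])
  have T'e: "T' = Node x {|Node u Dx|}" unfolding T'_def U_def Ne Pe Chm by simp
  have Ue: "U = Node u Dx" unfolding U_def Pe Chm by simp
  have "U |\<in>| {|c'|}" using c'(1) by (metis finsertI1)
  then have vU: "verts U = S - {x}" using c'(2) by simp
  have TU: "twins \<subseteq> verts (Node u Dx)" using vU Ue T xN by auto
  have stU': "search_tree Et (verts (Node u Dx)) (Node u Dx)" using st_U Ue by simp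
  have "verts (Node u Dx) \<subseteq> Vt" using vU Ue S by auto
  then obtain D where D: "Dx = {|D|}" "verts D = verts (Node u Dx) - {u}"
    using search_tree_twin_root[OF stU' _ TU uT] by blast
  have ntD: "\<not> twins \<subseteq> verts D" using u_notin_Dx D(1) uT by auto
  have "contract_twins v (Node u Dx) = the_elem (fset (contract_twins v |`| Dx))"
    by (rule contract_twins_twin[OF uT TU])
  also have "\<dots> = map_rtree (merge_twins v) D" using D(1) contract_twins_lacking[OF ntD] by simp
  finally have gU: "contract_twins v (Node u Dx) = map_rtree (merge_twins v) D" .
  have g2: "contract_twins v T' = Node (merge_twins v x) {|map_rtree (merge_twins v) D|}"
    unfolding T'e contract_twins_nontwin[OF xN] by (simp add: gU)
  have hU: "twin_label v (Node u Dx) = (if u = None then 2 else 1)" by (rule twin_label_twin[OF uT TU])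
  have hT': "twin_label v T' = swap12 (twin_label v (Node u Dx))"
    unfolding T'e by (rule twin_label_single_child[OF xN twins_T'[unfolded T'e]])
  have "twin_label v (Node u Ch) \<noteq> twin_label v T'" unfolding hT hT' hU by (simp add: swap12_def)
  then show ?thesis using gT g2 map_c D(1) by (simp add: contracted_step_def)
qed

lemma contracted_step_twin_nontwin_leaves:
  assumes uT: "u \<in> twins" and xN: "x \<notin> twins"
    and lv: "Node None {||} |\<in>| finsert U N \<and> Node (Some v) {||} |\<in>| finsert U N"
  shows "contracted_step (Node u Ch) T'"
proof -
  note gT = contract_twin_root[OF uT]
  have hT: "twin_label v (Node u Ch) = (if u = None then 2 else 1)"
    by (rule twin_label_twin[OF uT twins_T])
  note gDx = contract_Dx_twin_root[OF uT]
  have Uu: "U = Node u {||}"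
  proof -
    have "Node u {||} |\<in>| finsert U N" using lv uT by auto
    moreover have "Node u {||} |\<notin>| N" using N_subset u_notin_Dx by force
    ultimately show ?thesis by simp
  qed
  have Pe: "P = {||}" using Uu unfolding U_def by simp
  have Ne: "N = Dx" using ffilter_neg_eq_self_if_fempty[of "\<lambda>S. adj_set Et u (verts S)" Dx] Pe
    unfolding P_def N_def by simp
  obtain L where L: "L \<in> twins" "L \<noteq> u" using uT by auto
  have LN: "Node L {||} |\<in>| Dx"
  proof -
    have "Node L {||} |\<in>| finsert U N" using lv L(1) by auto
    moreover have "Node L {||} \<noteq> U" using Uu L(2) by simp
    ultimately show ?thesis using Ne by simp
  qed
  have T'e: "T' = Node x (finsert (Node u {||}) Dx)" unfolding T'_def Uu Ne ..
  have gl: "contract_twins v (Node u {||}) = Node v {||}"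
    using contract_twins_lacking[of v "Node u {||}"] uT L by auto
  have mL: "Node v {||} |\<in>| map_rtree (merge_twins v) |`| Dx"
  proof -
    have "map_rtree (merge_twins v) (Node L {||}) = Node v {||}" using L(1) by auto
    then show ?thesis using LN by (metis fimageI)
  qed
  have g2: "contract_twins v T' = Node (merge_twins v x) (map_rtree (merge_twins v) |`| Dx)"
    unfolding T'e contract_twins_nontwin[OF xN] fimage_finsert gl gDx using mL by (simp add: finsert_absorb)
  have hT': "twin_label v T' = 0" unfolding T'_def
  proof (rule twin_label_children_0[OF xN])
    fix d assume "d |\<in>| finsert U N"
    then have "d = Node u {||} \<or> d |\<in>| Dx" using Uu Ne by auto
    then show "twin_label v d = 0"
    proof
      assume "d = Node u {||}" then show ?thesis using twin_label_lacking[of v d] uT L by auto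
    next
      assume "d |\<in>| Dx" then show ?thesis using twin_label_lacking[of v d] u_notin_Dx uT by blast
    qed
  qed
  have "twin_label v (Node u Ch) \<noteq> twin_label v T'" unfolding hT hT' by simp
  then show ?thesis using gT g2 map_c by (simp add: contracted_step_def)
qed

lemma contracted_step_nontwin_twin_path:
  assumes uN: "u \<notin> twins" and xT: "x \<in> twins" and Tc: "twins \<subseteq> verts c"
  shows "contracted_step (Node u Ch) T'"
proof -
  have gT: "contract_twins v (Node u Ch) = Node (merge_twins v u) (contract_twins v |`| Ch)"
    by (rule contract_twins_nontwin[OF uN])
  have Chc: "Ch = {|c|}" by (rule single_child_with_twins[OF st S T uN c_child Tc])
  have Chm: "Ch |-| {|c|} = {||}" using Chc by simp
  obtain D where D: "Dx = {|D|}"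
    using search_tree_twin_root[OF st_c[unfolded c_def] verts_c_Vt[unfolded c_def] Tc[unfolded c_def] xT]
    by blast
  obtain c' where c': "finsert U N = {|c'|}" "verts c' = S - {x}"
    using search_tree_twin_root[OF st_T'[unfolded T'_def] S T xT] by blast
  have Ne: "N = {||}" by (rule N_empty_if_single[OF c'(1)])
  have Pe: "P = {|D|}" using P_eq_Dx[OF Ne] D(1) by simp
  have T'e: "T' = Node x {|Node u {|D|}|}" unfolding T'_def U_def Ne Pe Chm by simp
  have xD': "x \<notin> verts D" using x_notin_Dx D(1) by simp
  have nt2: "\<not> twins \<subseteq> verts (Node u {|D|})" using xD' x_neq_u xT by auto
  have g2: "contract_twins v T' = Node (merge_twins v u) {|map_rtree (merge_twins v) D|}"
  proof -
    have "contract_twins v T' = the_elem (fset (contract_twins v |`| {|Node u {|D|}|}))" unfolding T'e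
      by (rule contract_twins_twin[OF xT twins_T'[unfolded T'e]])
    also have "\<dots> = contract_twins v (Node u {|D|})" by simp
    also have "\<dots> = map_rtree (merge_twins v) (Node u {|D|})"
      by (rule contract_twins_lacking[OF nt2])
    finally show ?thesis by simp
  qed
  have ntD: "\<not> twins \<subseteq> verts D" using xD' xT by auto
  have gc: "contract_twins v c = map_rtree (merge_twins v) D"
  proof -
    have "contract_twins v c = the_elem (fset (contract_twins v |`| Dx))" unfolding c_def
      by (rule contract_twins_twin[OF xT Tc[unfolded c_def]])
    also have "\<dots> = map_rtree (merge_twins v) D" using D(1) contract_twins_lacking[OF ntD] by simp
    finally show ?thesis .
  qed
  have g1: "contract_twins v (Node u Ch) = Node (merge_twins v u) {|map_rtree (merge_twins v) D|}"
    using gT gc unfolding Chc by simp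
  have hc1: "twin_label v c = (if x = None then 2 else 1)"
    unfolding c_def by (rule twin_label_twin[OF xT Tc[unfolded c_def]])
  have hT: "twin_label v (Node u Ch) = swap12 (twin_label v c)"
    unfolding Chc by (rule twin_label_single_child[OF uN twins_T[unfolded Chc]])
  have hT': "twin_label v T' = (if x = None then 2 else 1)"
    unfolding T'e by (rule twin_label_twin[OF xT twins_T'[unfolded T'e]])
  have "twin_label v (Node u Ch) \<noteq> twin_label v T'" unfolding hT hT' hc1 by (simp add: swap12_def)
  then show ?thesis using g1 g2 by (simp add: contracted_step_def)
qed

lemma contracted_step_nontwin_twin_leaves:
  assumes uN: "u \<notin> twins" and xT: "x \<in> twins" and nTc: "\<not> twins \<subseteq> verts c"
  shows "contracted_step (Node u Ch) T'"
proof -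
  have gT: "contract_twins v (Node u Ch) = Node (merge_twins v u) (contract_twins v |`| Ch)"
    by (rule contract_twins_nontwin[OF uN])
  have lv: "Node None {||} |\<in>| Ch \<and> Node (Some v) {||} |\<in>| Ch"
    by (rule twin_leaves_at_root[OF uN nTc])
  have cl: "c = Node x {||}" by (rule twin_leaf_child[OF st lv c_child _ xT]) (simp add: c_def)
  have Dx0: "Dx = {||}" using cl unfolding c_def by simp
  have Pe: "P = {||}" and Ne: "N = {||}" unfolding P_def N_def unfolding Dx0 by (auto simp: fset_eq_iff)
  obtain L where L: "L \<in> twins" "L \<noteq> x" using xT by auto
  have LC: "Node L {||} |\<in>| Ch |-| {|c|}" using lv L cl by auto
  have lackCh: "\<not> twins \<subseteq> verts d" if "d |\<in>| Ch" for d by (rule child_lacks_twins[OF st lv that])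
  have T'e: "T' = Node x {|Node u (Ch |-| {|c|})|}" unfolding T'_def U_def Ne Pe by simp
  have xnot: "x \<notin> verts d" if "d |\<in>| Ch |-| {|c|}" for d
  proof
    assume "x \<in> verts d"
    moreover have "x \<in> verts c" using c_def by simp
    ultimately have "d = c" using search_tree_children_eq[OF sym_Et st _ c_child] that by auto
    then show False using that by simp
  qed
  have nt2: "\<not> twins \<subseteq> verts (Node u (Ch |-| {|c|}))" using xnot x_neq_u xT by auto
  have g2: "contract_twins v T' = Node (merge_twins v u) (map_rtree (merge_twins v) |`| (Ch |-| {|c|}))"
  proof -
    have "contract_twins v T' = the_elem (fset (contract_twins v |`| {|Node u (Ch |-| {|c|})|}))"
      unfolding T'e
      by (rule contract_twins_twin[OF xT twins_T'[unfolded T'e]])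
    also have "\<dots> = contract_twins v (Node u (Ch |-| {|c|}))" by simp
    also have "\<dots> = map_rtree (merge_twins v) (Node u (Ch |-| {|c|}))"
      by (rule contract_twins_lacking[OF nt2])
    finally show ?thesis by simp
  qed
  have gCh: "contract_twins v |`| Ch = map_rtree (merge_twins v) |`| Ch"
    by (rule contract_twins_fimage_lacking[OF lackCh])
  have Che: "Ch = finsert c (Ch |-| {|c|})" using c_child by auto
  have mcv: "map_rtree (merge_twins v) c = Node v {||}" using cl xT by auto
  have mL: "Node v {||} |\<in>| map_rtree (merge_twins v) |`| (Ch |-| {|c|})"
  proof -
    have "map_rtree (merge_twins v) (Node L {||}) = Node v {||}" using L(1) by auto
    then show ?thesis using LC by (metis fimageI)
  qed
  have "map_rtree (merge_twins v) |`| Ch = map_rtree (merge_twins v) |`| (Ch |-| {|c|})"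
    by (subst Che) (simp only: fimage_finsert mcv finsert_absorb[OF mL])
  then have g1: "contract_twins v (Node u Ch) = contract_twins v T'" unfolding gT gCh g2 by simp
  have hT: "twin_label v (Node u Ch) = 0"
  proof (rule twin_label_children_0[OF uN])
    fix d assume "d |\<in>| Ch" then show "twin_label v d = 0" by (rule twin_label_lacking[OF lackCh])
  qed
  have hT': "twin_label v T' = (if x = None then 2 else 1)"
    unfolding T'e by (rule twin_label_twin[OF xT twins_T'[unfolded T'e]])
  have "twin_label v (Node u Ch) \<noteq> twin_label v T'" unfolding hT hT' by simp
  then show ?thesis using g1 by (simp add: contracted_step_def)
qed

lemma contracted_step_nontwins_path:
  assumes uN: "u \<notin> twins" and xN: "x \<notin> twins" and Tc: "twins \<subseteq> verts c"
    and D: "Dx = {|D|}" "verts D = verts (Node x Dx) - {x}"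
  shows "contracted_step (Node u Ch) T'"
proof -
  have gT: "contract_twins v (Node u Ch) = Node (merge_twins v u) (contract_twins v |`| Ch)"
    by (rule contract_twins_nontwin[OF uN])
  have Chc: "Ch = {|c|}" by (rule single_child_with_twins[OF st S T uN c_child Tc])
  have Chm: "Ch |-| {|c|} = {||}" using Chc by simp
  have Ue: "U = Node u P" unfolding U_def Chm by simp
  have TvC: "twins \<subseteq> verts (Node x Dx)" using Tc unfolding c_def by simp
  have hT: "twin_label v (Node u Ch) = swap12 (twin_label v c)"
    unfolding Chc by (rule twin_label_single_child[OF uN twins_T[unfolded Chc]])
  have g1: "contract_twins v (Node u Ch) = Node (merge_twins v u) {|contract_twins v c|}"
    using gT unfolding Chc by simp
  have TD: "twins \<subseteq> verts D" using D(2) TvC xN by blast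
  have stD: "search_tree Et (verts D) D" using search_tree_NodeD(3)[OF st_c[unfolded c_def], of D] D(1)
    by simp
  have DV: "verts D \<subseteq> Vt" using D(2) verts_c_Vt unfolding c_def by auto
  have adj: "adj_set Et u (verts D)"
  proof -
    have "reach_in Et (verts D) None (Some v)"
      using search_tree_connected[OF stD] TD unfolding connected_in_def by blast
    then obtain b where b: "b \<in> verts D" "b \<in> W2"
      using reach_in_W1_meets_W2[OF DV twins_in_W1(1)] by blast
    have "u \<in> Vt" using u_in_S S by blast
    then have "u \<in> W1 \<or> u \<in> W2" by (rule Vt_W1_or_W2)
    then show ?thesis
    proof
      assume "u \<in> W1" then show ?thesis using Et_W1_W2 b unfolding adj_set_def by blast
    next
      assume "u \<in> W2" then have "Et u None" using Et_W1_W2[OF twins_in_W1(1)] sympD[OF sym_Et]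
        by blast
      then show ?thesis using TD unfolding adj_set_def by blast
    qed
  qed
  have Pe: "P = {|D|}" unfolding P_def unfolding D(1) using adj by (auto simp: fset_eq_iff)
  have Ne: "N = {||}" unfolding N_def unfolding D(1) using adj by (auto simp: fset_eq_iff)
  have T'e: "T' = Node x {|Node u {|D|}|}" unfolding T'_def Ue Pe Ne by simp
  have TvU: "twins \<subseteq> verts (Node u {|D|})" using TD by auto
  have stGD: "search_tree E (merge_twins v ` verts D) (contract_twins v D)"
    by (rule search_tree_contract_twins[OF stD DV TD])
  have vgD: "verts (contract_twins v D) = merge_twins v ` verts D" by (rule search_tree_verts[OF stGD])
  have gc: "contract_twins v c = Node (merge_twins v x) {|contract_twins v D|}"
    unfolding c_def unfolding D(1) contract_twins_nontwin[OF xN] by simp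
  have g2: "contract_twins v T' = Node (merge_twins v x) {|Node (merge_twins v u) {|contract_twins v D|}|}"
    unfolding T'e contract_twins_nontwin[OF xN] by (simp add: contract_twins_nontwin[OF uN])
  have adjE: "adj_set E (merge_twins v u) (verts (contract_twins v D))"
    unfolding vgD adj_set_merge_twins by (rule adj)
  have r: "rotation E (contract_twins v (Node u Ch)) (contract_twins v T')"
    unfolding g1 gc g2 by (rule rotation_path_adj[OF adjE])
  have hc1: "twin_label v c = swap12 (twin_label v D)" unfolding c_def unfolding D(1)
    by (rule twin_label_single_child[OF xN TvC[unfolded D(1)]])
  have hU: "twin_label v (Node u {|D|}) = swap12 (twin_label v D)"
    by (rule twin_label_single_child[OF uN TvU])
  have hT': "twin_label v T' = swap12 (twin_label v (Node u {|D|}))" unfolding T'e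
    by (rule twin_label_single_child[OF xN twins_T'[unfolded T'e]])
  have "twin_label v (Node u Ch) = twin_label v T'" unfolding hT hT' hc1 hU ..
  then show ?thesis using r by (simp add: contracted_step_def)
qed

lemma contracted_step_nontwins_leaves_below:
  assumes uN: "u \<notin> twins" and xN: "x \<notin> twins" and Tc: "twins \<subseteq> verts c"
    and lvc: "Node None {||} |\<in>| Dx \<and> Node (Some v) {||} |\<in>| Dx"
  shows "contracted_step (Node u Ch) T'"
proof -
  have gT: "contract_twins v (Node u Ch) = Node (merge_twins v u) (contract_twins v |`| Ch)"
    by (rule contract_twins_nontwin[OF uN])
  have Chc: "Ch = {|c|}" by (rule single_child_with_twins[OF st S T uN c_child Tc])
  have Chm: "Ch |-| {|c|} = {||}" using Chc by simp
  have Ue: "U = Node u P" unfolding U_def Chm by simp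
  have hT: "twin_label v (Node u Ch) = swap12 (twin_label v c)"
    unfolding Chc by (rule twin_label_single_child[OF uN twins_T[unfolded Chc]])
  have g1: "contract_twins v (Node u Ch) = Node (merge_twins v u) {|contract_twins v c|}"
    using gT unfolding Chc by simp
  have lackD: "\<not> twins \<subseteq> verts d" if "d |\<in>| Dx" for d
    by (rule child_lacks_twins[OF st_c[unfolded c_def] lvc that])
  have gDx: "contract_twins v |`| Dx = map_rtree (merge_twins v) |`| Dx"
    by (rule contract_twins_fimage_lacking[OF lackD])
  have gc: "contract_twins v c = Node (merge_twins v x) (map_rtree (merge_twins v) |`| Dx)"
    unfolding c_def contract_twins_nontwin[OF xN] gDx ..
  have gP: "contract_twins v |`| P = map_rtree (merge_twins v) |`| P"
    by (rule contract_twins_fimage_lacking) (use lackD P_subset in blast)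
  have gN: "contract_twins v |`| N = map_rtree (merge_twins v) |`| N"
    by (rule contract_twins_fimage_lacking) (use lackD N_subset in blast)
  have g2: "contract_twins v T' = Node (merge_twins v x) (finsert (Node (merge_twins v u) (map_rtree (merge_twins v) |`| P)) (map_rtree (merge_twins v) |`| N))"
    unfolding T'_def contract_twins_nontwin[OF xN] fimage_finsert Ue contract_twins_nontwin[OF uN] gP gN ..
  have r: "rotation E (contract_twins v (Node u Ch)) (contract_twins v T')"
    using rotation_single_child_root[of E "merge_twins v u" "merge_twins v x" "map_rtree (merge_twins v) |`| Dx"]
    unfolding g1 gc g2 ffilter_adj_set_map_rtree[of Et E "merge_twins v", OF Et_merge] P_def N_def .
  have hc0: "twin_label v c = 0" unfolding c_def
  proof (rule twin_label_children_0[OF xN])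
    fix d assume "d |\<in>| Dx" then show "twin_label v d = 0" by (rule twin_label_lacking[OF lackD])
  qed
  have hT': "twin_label v T' = 0" unfolding T'_def
  proof (rule twin_label_children_0[OF xN])
    fix d assume "d |\<in>| finsert U N"
    then have "d = U \<or> d |\<in>| N" by auto
    then show "twin_label v d = 0"
    proof
      assume "d = U"
      have "twin_label v U = 0" unfolding Ue
      proof (rule twin_label_children_0[OF uN])
        fix e assume "e |\<in>| P" then show "twin_label v e = 0"
          by (rule twin_label_lacking[OF lackD[OF P_subset]])
      qed
      then show ?thesis using \<open>d = U\<close> by simp
    next
      assume "d |\<in>| N" then show ?thesis by (rule twin_label_lacking[OF lackD[OF N_subset]])
    qed
  qed
  have "twin_label v (Node u Ch) = twin_label v T'" unfolding hT hc0 hT' by simp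
  then show ?thesis using r by (simp add: contracted_step_def)
qed

lemma contracted_step_nontwins_leaves_beside:
  assumes uN: "u \<notin> twins" and xN: "x \<notin> twins" and nTc: "\<not> twins \<subseteq> verts c"
  shows "contracted_step (Node u Ch) T'"
proof -
  have gT: "contract_twins v (Node u Ch) = Node (merge_twins v u) (contract_twins v |`| Ch)"
    by (rule contract_twins_nontwin[OF uN])
  have lv: "Node None {||} |\<in>| Ch \<and> Node (Some v) {||} |\<in>| Ch"
    by (rule twin_leaves_at_root[OF uN nTc])
  have notok: "a \<notin> verts c" if "a \<in> twins" for a
  proof
    assume "a \<in> verts c"
    then have "c = Node a {||}" by (rule twin_leaf_child[OF st lv c_child _ that])
    then show False using xN that unfolding c_def by simp
  qed
  have lackCh: "\<not> twins \<subseteq> verts d" if "d |\<in>| Ch" for d by (rule child_lacks_twins[OF st lv that])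
  have lackD: "\<not> twins \<subseteq> verts d" if "d |\<in>| Dx" for d
    using verts_Dx_subset[OF that] notok by blast
  have gCh: "contract_twins v |`| Ch = map_rtree (merge_twins v) |`| Ch"
    by (rule contract_twins_fimage_lacking[OF lackCh])
  have gP: "contract_twins v |`| P = map_rtree (merge_twins v) |`| P"
    by (rule contract_twins_fimage_lacking) (use lackD P_subset in blast)
  have gN: "contract_twins v |`| N = map_rtree (merge_twins v) |`| N"
    by (rule contract_twins_fimage_lacking) (use lackD N_subset in blast)
  have gCm: "contract_twins v |`| (Ch |-| {|c|}) = map_rtree (merge_twins v) |`| (Ch |-| {|c|})"
    by (rule contract_twins_fimage_lacking) (use lackCh in auto)
  have g2: "contract_twins v T' = Node (merge_twins v x) (finsert (Node (merge_twins v u) (map_rtree (merge_twins v) |`| (Ch |-| {|c|}) |\<union>| map_rtree (merge_twins v) |`| P)) (map_rtree (merge_twins v) |`| N))"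
    unfolding T'_def contract_twins_nontwin[OF xN] fimage_finsert U_def contract_twins_nontwin[OF uN] fimage_funion gCm gP gN ..
  have "contract_twins v c |\<notin>| contract_twins v |`| (Ch |-| {|c|})"
    using contract_twins_notin_siblings[OF st c_child lv] notok by blast
  then have nin: "map_rtree (merge_twins v) c |\<notin>| map_rtree (merge_twins v) |`| (Ch |-| {|c|})"
    unfolding gCm contract_twins_lacking[OF lackCh[OF c_child]] .
  have em: "map_rtree (merge_twins v) |`| (Ch |-| {|c|}) = map_rtree (merge_twins v) |`| Ch |-| {|map_rtree (merge_twins v) c|}"
    by (rule fimage_fminus_fsingleton[OF c_child nin])
  have m: "Node (merge_twins v x) (map_rtree (merge_twins v) |`| Dx) |\<in>| map_rtree (merge_twins v) |`| Ch"
    using c_child map_c by (metis fimageI)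
  have em': "map_rtree (merge_twins v) |`| Ch |-| {|Node (merge_twins v x) (map_rtree (merge_twins v) |`| Dx)|}
      = map_rtree (merge_twins v) |`| (Ch |-| {|c|})" using em map_c by simp
  have fa: "ffilter (\<lambda>S. adj_set E (merge_twins v u) (verts S)) (map_rtree (merge_twins v) |`| Dx) = map_rtree (merge_twins v) |`| P"
    unfolding P_def by (rule ffilter_adj_set_map_rtree(1)[of Et E "merge_twins v", OF Et_merge])
  have fn: "ffilter (\<lambda>S. \<not> adj_set E (merge_twins v u) (verts S)) (map_rtree (merge_twins v) |`| Dx) = map_rtree (merge_twins v) |`| N"
    unfolding N_def by (rule ffilter_adj_set_map_rtree(2)[of Et E "merge_twins v", OF Et_merge])
  have r: "rotation E (contract_twins v (Node u Ch)) (contract_twins v T')"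
    unfolding gT gCh g2 using rotation.rot_root[OF m, of E "merge_twins v u"] unfolding em' fa fn .
  have hT: "twin_label v (Node u Ch) = 0"
  proof (rule twin_label_children_0[OF uN])
    fix d assume "d |\<in>| Ch" then show "twin_label v d = 0" by (rule twin_label_lacking[OF lackCh])
  qed
  have "twin_label v e = 0" if "e |\<in>| (Ch |-| {|c|}) |\<union>| P" for e
  proof -
    have "e |\<in>| Ch \<or> e |\<in>| Dx" using that P_subset by auto
    then show ?thesis using twin_label_lacking[OF lackCh] twin_label_lacking[OF lackD] by blast
  qed
  then have hU: "twin_label v U = 0" unfolding U_def using twin_label_children_0[OF uN] by blast
  have hT': "twin_label v T' = 0" unfolding T'_def
  proof (rule twin_label_children_0[OF xN])
    fix d assume "d |\<in>| finsert U N"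
    then show "twin_label v d = 0" using hU twin_label_lacking[OF lackD[OF N_subset]] by auto
  qed
  have "twin_label v (Node u Ch) = twin_label v T'" unfolding hT hT' ..
  then show ?thesis using r by (simp add: contracted_step_def)
qed

lemma contracted_step_root: "contracted_step (Node u Ch) T'"
proof (cases "u \<in> twins")
  case uT: True
  show ?thesis
  proof (cases "x \<in> twins")
    case True then show ?thesis by (rule contracted_step_twin_twin[OF uT])
  next
    case xN: False
    from search_tree_nontwin_root[OF st_T'[unfolded T'_def] S T xN] show ?thesis
      using contracted_step_twin_nontwin_path[OF uT xN] contracted_step_twin_nontwin_leaves[OF uT xN]
      by blast
  qed
next
  case uN: False
  show ?thesis
  proof (cases "x \<in> twins")
    case xT: True
    then show ?thesis
      using contracted_step_nontwin_twin_path[OF uN xT] contracted_step_nontwin_twin_leaves[OF uN xT]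
      by blast
  next
    case xN: False
    show ?thesis
    proof (cases "twins \<subseteq> verts c")
      case Tc: True
      have "twins \<subseteq> verts (Node x Dx)" using Tc unfolding c_def by simp
      from search_tree_nontwin_root[OF st_c[unfolded c_def] verts_c_Vt[unfolded c_def] this xN]
      show ?thesis
        using contracted_step_nontwins_path[OF uN xN Tc] contracted_step_nontwins_leaves_below[OF uN xN Tc]
        by blast
    next
      case False
      then show ?thesis by (rule contracted_step_nontwins_leaves_beside[OF uN xN])
    qed
  qed
qed

end

context false_twin_join
begin

lemma rotation_contracted_step:
  "rotation Et T T' \<Longrightarrow> search_tree Et S T \<Longrightarrow> search_tree Et S T' \<Longrightarrow> S \<subseteq> Vt \<Longrightarrow> twins \<subseteq> S
   \<Longrightarrow> contracted_step T T'"
proof (induction arbitrary: S rule: rotation.induct)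
  case (rot_root x Dx Ch u)
  interpret root_rotation V E V1 V2 v S u x Ch Dx
    by (intro root_rotation.intro root_rotation_axioms.intro false_twin_join_axioms) (use rot_root in auto)
  show ?case using contracted_step_root unfolding T'_def U_def c_def P_def N_def .
next
  case (rot_sub s Ch s' w)
  show ?case by (rule contracted_step_sub[OF rot_sub.hyps rot_sub.IH rot_sub.prems])
qed

lemma rot_adj_contracted:
  assumes T: "T \<in> rot_vertices Vt Et" "T' \<in> rot_vertices Vt Et" and adj: "rot_adj Et T T'"
  shows "(contract_twins v T = contract_twins v T' \<and> twin_label v T \<noteq> twin_label v T')
    \<or> (rot_adj E (contract_twins v T) (contract_twins v T') \<and> twin_label v T = twin_label v T')"
proof -
  have st: "search_tree Et Vt T" "search_tree Et Vt T'" using T unfolding rot_vertices_def by auto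
  have stc: "search_tree E V (contract_twins v T)" "search_tree E V (contract_twins v T')"
    using contract_twins_rot_vertices T unfolding rot_vertices_def by auto
  have "rotation Et T T' \<or> rotation Et T' T" using adj unfolding rot_adj_def by simp
  then have "contracted_step T T' \<or> contracted_step T' T"
    using rotation_contracted_step[OF _ st(1) st(2) subset_refl twins_subset_Vt]
      rotation_contracted_step[OF _ st(2) st(1) subset_refl twins_subset_Vt] by blast
  then show ?thesis
  proof
    assume "contracted_step T T'"
    then consider "contract_twins v T = contract_twins v T'" "twin_label v T \<noteq> twin_label v T'"
      | "rotation E (contract_twins v T) (contract_twins v T')" "twin_label v T = twin_label v T'"
      unfolding contracted_step_def by blast
    then show ?thesis
    proof cases
      case 2
      then have "contract_twins v T \<noteq> contract_twins v T'" using rotation_neq stc(1) by blast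
      then show ?thesis using 2 unfolding rot_adj_def by simp
    qed simp
  next
    assume "contracted_step T' T"
    then consider "contract_twins v T' = contract_twins v T" "twin_label v T' \<noteq> twin_label v T"
      | "rotation E (contract_twins v T') (contract_twins v T)" "twin_label v T' = twin_label v T"
      unfolding contracted_step_def by blast
    then show ?thesis
    proof cases
      case 2
      then have "contract_twins v T' \<noteq> contract_twins v T" using rotation_neq stc(2) by blast
      then show ?thesis using 2 unfolding rot_adj_def by auto
    qed auto
  qed
qed

lemma colorable_twin_graph:
  assumes "colorable (rot_vertices V E) (rot_adj E) k" and "3 \<le> k"
  shows "colorable (rot_vertices Vt Et) (rot_adj Et) k"
proof -
  have label: "twin_label v T < 3" if "T \<in> rot_vertices Vt Et" for T
    using twin_label_le[of v T] by linarith
  show ?thesis by (rule colorable_shifted[OF assms contract_twins_rot_vertices label rot_adj_contracted])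
qed

definition hang :: "'a rtree \<Rightarrow> 'a option rtree" where
  "hang T = Node None {|map_rtree Some T|}"

lemma Et_Some: "E a b = Et (Some a) (Some b)"
  unfolding twin_E_def by simp

lemma search_tree_hang: assumes st: "search_tree E V T" shows "search_tree Et Vt (hang T)"
proof -
  have stm: "search_tree Et (Some ` V) (map_rtree Some T)"
    by (rule search_tree_map_rtree[of E Et Some, OF Et_Some st]) simp
  obtain b0 where b0: "b0 \<in> V2" using V2_nonempty by blast
  then have "Some b0 \<in> W2" "Some b0 \<in> Vt" unfolding W2_def twin_V_def using V2_subset by auto
  then have "connected_in Et Vt"
    using connected_in_W1_W2[of Vt None "Some b0"] twins_in_W1(1) by (auto simp: twin_V_def)
  then show ?thesis unfolding hang_def twin_V_def by (intro search_tree_chain[OF stm]) auto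
qed

lemma rotation_hang:
  assumes "rotation E T T'" and "search_tree E V T"
  shows "rotation Et (hang T) (hang T')"
  unfolding hang_def
  by (rule rotation_in_single_child, rule rotation_map_rtree[of E Et Some, OF Et_Some assms]) simp

lemma hang_inj: assumes "hang T = hang T'" shows "T = T'"
proof -
  have "map_rtree Some T = map_rtree Some T'" using assms unfolding hang_def by simp
  moreover have "inj (map_rtree Some)" by (rule rtree.inj_map) (simp add: inj_def)
  ultimately show ?thesis by (rule injD[rotated])
qed

lemma colorable_from_twin_graph:
  assumes "colorable (rot_vertices Vt Et) (rot_adj Et) k"
  shows "colorable (rot_vertices V E) (rot_adj E) k"
proof (rule colorable_pullback[OF assms])
  show "hang T \<in> rot_vertices Vt Et" if "T \<in> rot_vertices V E" for T
    using search_tree_hang that unfolding rot_vertices_def by simp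
  show "rot_adj Et (hang T) (hang T')"
    if "T \<in> rot_vertices V E" "T' \<in> rot_vertices V E" "rot_adj E T T'" for T T'
  proof -
    have "search_tree E V T" "search_tree E V T'" using that(1,2) unfolding rot_vertices_def by auto
    then have "rotation Et (hang T) (hang T') \<or> rotation Et (hang T') (hang T)"
      using that(3) rotation_hang unfolding rot_adj_def by blast
    moreover have "hang T \<noteq> hang T'" using that(3) hang_inj unfolding rot_adj_def by blast
    ultimately show ?thesis unfolding rot_adj_def by simp
  qed
qed

text \<open>
  A non-edge \<open>x y\<close> lies inside \<open>V\<^sub>1\<close> or inside \<open>V\<^sub>2\<close>; a vertex \<open>m\<close> of the other side is
  a common neighbour, and \<open>{x, m, y}\<close> dominates \<open>G\<close> because it meets both sides.
\<close>
lemma dominating_induced_path: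
  assumes "\<exists>x\<in>V. \<exists>y\<in>V. x \<noteq> y \<and> \<not> E x y"
  obtains x m y where "x \<in> V" "m \<in> V" "y \<in> V" "E x m" "E m y" "\<not> E x y" "x \<noteq> y"
    "\<forall>z\<in>V. E z x \<or> E z m \<or> E z y"
proof -
  obtain x y where xy: "x \<in> V" "y \<in> V" "x \<noteq> y" "\<not> E x y" using assms by blast
  have sides: "z \<in> V1 \<or> z \<in> V2" if "z \<in> V" for z using that V1_Un_V2 by blast
  have V1_V2: "E a b" if "a \<in> V1" "b \<in> V2" for a b using E_V1_iff[OF that(1)] that(2) V2_subset by blast
  show ?thesis
  proof (cases "x \<in> V1")
    case x1: True
    then have y1: "y \<in> V1" using xy sides V1_V2 by blast
    obtain m where m: "m \<in> V2" using V2_nonempty by blast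
    have "\<forall>z\<in>V. E z x \<or> E z m \<or> E z y" using sides V1_V2 E_sym x1 m by blast
    then show ?thesis using that[of x m y] xy m x1 y1 V1_V2 E_sym V2_subset by blast
  next
    case x2: False
    then have x2: "x \<in> V2" and y2: "y \<in> V2" using xy sides V1_V2 E_sym by blast+
    have "\<forall>z\<in>V. E z x \<or> E z v \<or> E z y" using sides V1_V2 E_sym x2 v_in_V1 by blast
    then show ?thesis using that[of x v y] xy x2 y2 V1_V2 E_sym v_in_V1 v_in_V by blast
  qed
qed

lemma three_le_colorable:
  assumes "\<exists>x\<in>V. \<exists>y\<in>V. x \<noteq> y \<and> \<not> E x y" and col: "colorable (rot_vertices V E) (rot_adj E) k"
  shows "3 \<le> k"
proof -
  obtain x m y where path: "x \<in> V" "m \<in> V" "y \<in> V" "E x m" "E m y" "\<not> E x y" "x \<noteq> y"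
    and dom: "\<forall>z\<in>V. E z x \<or> E z m \<or> E z y"
    using dominating_induced_path[OF assms(1)] .
  obtain T1 T2 T3 T4 T5 where
    "T1 \<in> rot_vertices V E" "T2 \<in> rot_vertices V E" "T3 \<in> rot_vertices V E"
    "T4 \<in> rot_vertices V E" "T5 \<in> rot_vertices V E"
    "rot_adj E T1 T2" "rot_adj E T2 T3" "rot_adj E T3 T4" "rot_adj E T4 T5" "rot_adj E T5 T1"
    by (rule rotation_graph_pentagon[OF simple path dom])
  then show ?thesis by (rule three_le_if_colorable_pentagon[OF col])
qed

end

theorem proposition3p7:
  fixes V :: "'a set" and E :: "'a \<Rightarrow> 'a \<Rightarrow> bool" and V1 V2 :: "'a set" and v :: 'a
  assumes "simple_graph V E"
    and "connected_in E V"
    and "\<exists>x\<in>V. \<exists>y\<in>V. x \<noteq> y \<and> \<not> E x y"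
    and "V1 \<union> V2 = V" and "V1 \<inter> V2 = {}" and "V1 \<noteq> {}" and "V2 \<noteq> {}"
    and "\<forall>u\<in>V1. nbhd V E u = V2"
    and "v \<in> V1"
  shows "chromatic_number (rot_vertices (twin_V V) (twin_E E v)) (rot_adj (twin_E E v))
       = chromatic_number (rot_vertices V E) (rot_adj E)"
proof -
  interpret false_twin_join V E V1 V2 v
    by (rule false_twin_join.intro) (use assms in auto)
  have "colorable (rot_vertices (twin_V V) (twin_E E v)) (rot_adj (twin_E E v))
      = colorable (rot_vertices V E) (rot_adj E)"
    using colorable_from_twin_graph colorable_twin_graph three_le_colorable[OF assms(3)] by blast
  then show ?thesis unfolding chromatic_number_eq_Least_colorable by simp
qed

end
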